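(* For each $n\ge1$ and $p\in[0,1)$, the reliability polynomial of $\Gamma_n$ is $$R(\Gamma_n,p)=p^{\frac{3^n+1}{2}}(1-p)^{\frac{3^n-1}{2}}\,T_n\!\left(1,\tfrac{1}{1-p}\right),\qquad T_n\!\left(1,\tfrac{1}{1-p}\right)=T_{2,n}\!\left(1,\tfrac{1}{1-p}\right),$$ where, writing $T_2,N,M$ for $T_{2,n},N_n,M_n$ evaluated at $(1,\frac1{1-p})$, $$T_{2,n+1}=\tfrac{p}{1-p}T_2^3+6T_2^2N,\quad N_{n+1}=\tfrac{p}{1-p}T_2^2N+T_2^2M+7T_2N^2,\quad M_{n+1}=\tfrac{3p}{1-p}T_2N^2+12T_2NM+14N^3,$$ with $T_{2,1}(1,\frac1{1-p})=\frac{3-2p}{1-p}$, $N_1=M_1=1$.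
   Context: Graphs are finite; multiple edges are allowed. For a graph $G$, a spanning subgraph $A$ has vertex set $V(G)$ and edge set $E(A)\subseteq E(G)$; $k(A)$ is its number of components, $r(A)=|V(G)|-k(A)$, $n(A)=|E(A)|-r(A)$; the weight of $A$ is $(x-1)^{r(G)-r(A)}(y-1)^{n(A)}$ and the Tutte polynomial $T(G;x,y)$ is the sum of the weights of all spanning subgraphs. Sierpiński graphs $\Gamma_n$ ($n\ge1$), each with three outmost vertices top, left, right: $\Gamma_1$ is the triangle $K_3$; $\Gamma_{n+1}$ is obtained from three disjoint copies $G_1,G_2,G_3$ of $\Gamma_n$ by identifying left$(G_1)$ with top$(G_2)$, right$(G_1)$ with top$(G_3)$, right$(G_2)$ with left$(G_3)$; its outmost vertices are top$(G_1)$, left$(G_2)$, right$(G_3)$. $T_n=T(\Gamma_n;x,y)$. $T_{2,n}$ (resp. $T_{1,n}$, $T_{0,n}$) is the sum of the weights of the spanning subgraphs of $\Gamma_n$ in which the three outmost vertices lie in one component (resp. left and right outmost in one component, top in another; resp. the three in three distinct components). $N_n(x,y)=T_{1,n}/(x-1)$ and $M_n(x,y)=T_{0,n}/(x-1)^2$, which are polynomials. The reliability polynomial $R(G,p)$ is the probability that the random spanning subgraph obtained by keeping each edge independently with probability $p$ is connected. *)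

theory Defs
  imports Complex_Main
begin

text \<open>Vertices are natural numbers; edges are given by a list of endpoint pairs,
  edge i being the i-th list entry (so multiple edges are allowed).\<close>

record sgraph =
  verts :: "nat set"
  edges :: "(nat \<times> nat) list"
  top :: nat
  lft :: nat
  rgt :: nat

definition edge_ids :: "sgraph \<Rightarrow> nat set" where
  "edge_ids G = {0..<length (edges G)}"

definition triangle :: sgraph where
  "triangle = \<lparr>verts = {0,1,2}, edges = [(0,1),(1,2),(0,2)], top = 0, lft = 1, rgt = 2\<rparr>"

text \<open>Three disjoint copies G1,G2,G3 (vertex v of copy i is encoded as 3v+i-1),
  with left(G1)=top(G2), right(G1)=top(G3), right(G2)=left(G3) identified.\<close>
definition sier_step :: "sgraph \<Rightarrow> sgraph" where
  "sier_step G =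
    (let f1 = (\<lambda>v. 3*v);
         f2 = (\<lambda>v. if v = top G then 3 * lft G else 3*v+1);
         f3 = (\<lambda>v. if v = top G then 3 * rgt G
                   else if v = lft G then 3 * rgt G + 1 else 3*v+2)
     in \<lparr>verts = f1 ` verts G \<union> f2 ` verts G \<union> f3 ` verts G,
         edges = map (map_prod f1 f1) (edges G) @ map (map_prod f2 f2) (edges G)
                 @ map (map_prod f3 f3) (edges G),
         top = f1 (top G), lft = f2 (lft G), rgt = f3 (rgt G)\<rparr>)"

primrec sier_aux :: "nat \<Rightarrow> sgraph" where
  "sier_aux 0 = triangle"
| "sier_aux (Suc n) = sier_step (sier_aux n)"

definition Sierpinski :: "nat \<Rightarrow> sgraph" where
  "Sierpinski n = sier_aux (n - 1)"

text \<open>Spanning subgraph A given by a set S of edge indices.\<close>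
definition adj :: "sgraph \<Rightarrow> nat set \<Rightarrow> nat \<Rightarrow> nat \<Rightarrow> bool" where
  "adj G S u v \<longleftrightarrow> (\<exists>i\<in>S. i < length (edges G) \<and>
      (edges G ! i = (u,v) \<or> edges G ! i = (v,u)))"

definition conn :: "sgraph \<Rightarrow> nat set \<Rightarrow> (nat \<times> nat) set" where
  "conn G S = {(u,v). u \<in> verts G \<and> v \<in> verts G \<and> (adj G S)\<^sup>*\<^sup>* u v}"

definition ncomp :: "sgraph \<Rightarrow> nat set \<Rightarrow> nat" where
  "ncomp G S = card (verts G // conn G S)"

definition rk :: "sgraph \<Rightarrow> nat set \<Rightarrow> nat" where
  "rk G S = card (verts G) - ncomp G S"

definition nul :: "sgraph \<Rightarrow> nat set \<Rightarrow> nat" where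
  "nul G S = card S - rk G S"

definition tweight :: "sgraph \<Rightarrow> real \<Rightarrow> real \<Rightarrow> nat set \<Rightarrow> real" where
  "tweight G x y S = (x - 1) ^ (rk G (edge_ids G) - rk G S) * (y - 1) ^ nul G S"

definition tutte :: "sgraph \<Rightarrow> real \<Rightarrow> real \<Rightarrow> real" where
  "tutte G x y = (\<Sum>S\<in>Pow (edge_ids G). tweight G x y S)"

definition T2 :: "sgraph \<Rightarrow> real \<Rightarrow> real \<Rightarrow> real" where
  "T2 G x y = (\<Sum>S | S \<subseteq> edge_ids G \<and> (top G, lft G) \<in> conn G S \<and> (top G, rgt G) \<in> conn G S.
      tweight G x y S)"

definition T1 :: "sgraph \<Rightarrow> real \<Rightarrow> real \<Rightarrow> real" where
  "T1 G x y = (\<Sum>S | S \<subseteq> edge_ids G \<and> (lft G, rgt G) \<in> conn G S \<and> (top G, lft G) \<notin> conn G S.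
      tweight G x y S)"

definition T0 :: "sgraph \<Rightarrow> real \<Rightarrow> real \<Rightarrow> real" where
  "T0 G x y = (\<Sum>S | S \<subseteq> edge_ids G \<and> (top G, lft G) \<notin> conn G S \<and> (top G, rgt G) \<notin> conn G S
      \<and> (lft G, rgt G) \<notin> conn G S. tweight G x y S)"

text \<open>N = T1/(x-1) and M = T0/(x-1)^2 as polynomials: in every term of T1
  (resp. T0) the exponent of (x-1) is at least 1 (resp. 2), and we lower it.\<close>
definition Npoly :: "sgraph \<Rightarrow> real \<Rightarrow> real \<Rightarrow> real" where
  "Npoly G x y = (\<Sum>S | S \<subseteq> edge_ids G \<and> (lft G, rgt G) \<in> conn G S \<and> (top G, lft G) \<notin> conn G S.
      (x - 1) ^ (rk G (edge_ids G) - rk G S - 1) * (y - 1) ^ nul G S)"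

definition Mpoly :: "sgraph \<Rightarrow> real \<Rightarrow> real \<Rightarrow> real" where
  "Mpoly G x y = (\<Sum>S | S \<subseteq> edge_ids G \<and> (top G, lft G) \<notin> conn G S \<and> (top G, rgt G) \<notin> conn G S
      \<and> (lft G, rgt G) \<notin> conn G S. (x - 1) ^ (rk G (edge_ids G) - rk G S - 2) * (y - 1) ^ nul G S)"

definition reliability :: "sgraph \<Rightarrow> real \<Rightarrow> real" where
  "reliability G p = (\<Sum>S | S \<subseteq> edge_ids G \<and> ncomp G S = 1.
      p ^ card S * (1 - p) ^ (card (edge_ids G) - card S))"

end

theory Submission
  imports Defs
begin

text \<open>
  At x = 1 the factor (x - 1)^(r(G) - r(A)) vanishes unless A has only as many components as
  forced by how it connects the three outmost vertices, i.e. unless every component of A contains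
  an outmost vertex. So T_2, N and M at x = 1 are sums of (y - 1)^n(A) over such rooted subgraphs,
  classified by which outmost vertices they connect, and the reliability is a sum over the rooted
  subgraphs connecting all three: these are the connected ones, of rank |V| - 1 = (3^n + 1)/2, so
  p^|A| (1 - p)^(|E| - |A|) = p^(|V| - 1) (1 - p)^(|E| - |V| + 1) (p/(1 - p))^n(A).

  A spanning subgraph of Gamma_(n+1) is a triple of spanning subgraphs of the three copies. It is
  rooted iff the three parts are rooted and every component of the glued six junctions meets an
  outmost vertex, and then its connection state, its number of components and hence its nullity
  depend only on the states of the three parts. Summing over triples turns the weights of Gamma_n
  into those of Gamma_(n+1) by a polynomial recursion; checking the 125 triples of states gives
  the stated recursion.
\<close>


section \<open>Connection states of three terminals\<close>

text \<open>At x = 1 the weights of the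
  states Joined, Top_apart and Apart are the paper's T_2, N and M.\<close>

datatype tstate = Joined | Top_apart | Lft_apart | Rgt_apart | Apart

lemma UNIV_tstate: "(UNIV :: tstate set) = {Joined, Top_apart, Lft_apart, Rgt_apart, Apart}"
  by (auto intro: tstate.exhaust)

lemma finite_UNIV_tstate: "finite (UNIV :: tstate set)"
  by (simp add: UNIV_tstate)

fun joins_tl :: "tstate \<Rightarrow> bool" where
  "joins_tl Joined = True" | "joins_tl Rgt_apart = True" | "joins_tl _ = False"

fun joins_tr :: "tstate \<Rightarrow> bool" where
  "joins_tr Joined = True" | "joins_tr Lft_apart = True" | "joins_tr _ = False"

fun joins_lr :: "tstate \<Rightarrow> bool" where
  "joins_lr Joined = True" | "joins_lr Top_apart = True" | "joins_lr _ = False"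

fun nblocks :: "tstate \<Rightarrow> nat" where
  "nblocks Joined = 1" | "nblocks Apart = 3" | "nblocks _ = 2"

lemma nblocks_pos: "1 \<le> nblocks s"
  by (cases s) auto

lemma nblocks_le_3: "nblocks s \<le> 3"
  by (cases s) auto

definition tstate_mk :: "bool \<Rightarrow> bool \<Rightarrow> bool \<Rightarrow> tstate" where
  "tstate_mk a b c =
    (if a \<and> b then Joined else if c then Top_apart else if b then Lft_apart
     else if a then Rgt_apart else Apart)"

lemma joins_transitive:
  "joins_tl s \<Longrightarrow> joins_tr s \<Longrightarrow> joins_lr s"
  "joins_tl s \<Longrightarrow> joins_lr s \<Longrightarrow> joins_tr s"
  "joins_tr s \<Longrightarrow> joins_lr s \<Longrightarrow> joins_tl s"
  by (cases s; simp)+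

lemma joins_tstate_mk:
  "(a \<and> b \<longrightarrow> c) \<Longrightarrow> (a \<and> c \<longrightarrow> b) \<Longrightarrow> (b \<and> c \<longrightarrow> a) \<Longrightarrow>
   joins_tl (tstate_mk a b c) = a \<and> joins_tr (tstate_mk a b c) = b \<and> joins_lr (tstate_mk a b c) = c"
  unfolding tstate_mk_def by (cases a; cases b; cases c) auto

section \<open>The gluing pattern of three copies\<close>

lemma ex_less_3: "(\<exists>i<(3::nat). P i) \<longleftrightarrow> P 0 \<or> P 1 \<or> P 2"
  unfolding numeral_3_eq_3 numeral_2_eq_2 by (auto simp: less_Suc_eq)

lemma all_less_3: "(\<forall>i<(3::nat). P i) \<longleftrightarrow> P 0 \<and> P 1 \<and> P 2"
  unfolding numeral_3_eq_3 numeral_2_eq_2 by (auto simp: less_Suc_eq)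

lemma less_3_cases: "i < (3::nat) \<Longrightarrow> i = 0 \<or> i = 1 \<or> i = 2"
  by auto

lemma bex_less_3:
  "(\<exists>i\<in>S. i < 3 \<and> P i) \<longleftrightarrow> (0 \<in> S \<and> P 0) \<or> (1 \<in> S \<and> P 1) \<or> (2 \<in> S \<and> P (2::nat))"
proof
  assume "\<exists>i\<in>S. i < 3 \<and> P i" then show "(0 \<in> S \<and> P 0) \<or> (1 \<in> S \<and> P 1) \<or> (2 \<in> S \<and> P (2::nat))"
    using less_3_cases by auto
next
  have n: "0 < (3::nat)" "1 < (3::nat)" "2 < (3::nat)" by simp_all
  assume "(0 \<in> S \<and> P 0) \<or> (1 \<in> S \<and> P 1) \<or> (2 \<in> S \<and> P (2::nat))"
  then show "\<exists>i\<in>S. i < 3 \<and> P i" using n by blast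
qed

text \<open>The junctions of three glued copies: the outmost vertices Top, Lft, Rgt of the glued graph
  and the three identified vertices, Mid_tl = lft of copy 0 = top of copy 1,
  Mid_tr = rgt of copy 0 = top of copy 2, Mid_lr = rgt of copy 1 = lft of copy 2.
  Copies and their outmost vertices (top, lft, rgt) are indexed by 0, 1, 2.\<close>

datatype junction = Top | Mid_tl | Mid_tr | Lft | Mid_lr | Rgt

definition corner :: "nat \<Rightarrow> nat \<Rightarrow> junction" where
  "corner i k =
    (if i = 0 then (if k = 0 then Top else if k = 1 then Mid_tl else Mid_tr)
     else if i = 1 then (if k = 0 then Mid_tl else if k = 1 then Lft else Mid_lr)
     else (if k = 0 then Mid_tr else if k = 1 then Mid_lr else Rgt))"

definition tstate_joins :: "tstate \<Rightarrow> nat \<Rightarrow> nat \<Rightarrow> bool" where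
  "tstate_joins s k k' \<longleftrightarrow> k = k' \<or> ({k, k'} = {0, 1} \<and> joins_tl s)
     \<or> ({k, k'} = {0, 2} \<and> joins_tr s) \<or> ({k, k'} = {1, 2} \<and> joins_lr s)"

definition nth3 :: "'a \<Rightarrow> 'a \<Rightarrow> 'a \<Rightarrow> nat \<Rightarrow> 'a" where
  "nth3 a b c i = (if i = 0 then a else if i = 1 then b else c)"

lemma corner_in:
  "k < 3 \<Longrightarrow> corner 0 k \<in> {Top, Mid_tl, Mid_tr}"
  "k < 3 \<Longrightarrow> corner 1 k \<in> {Mid_tl, Lft, Mid_lr}"
  "k < 3 \<Longrightarrow> corner 2 k \<in> {Mid_tr, Mid_lr, Rgt}"
  by (auto simp: corner_def)

lemma ex_junction:
  "(\<exists>x. P x) \<longleftrightarrow> P Top \<or> P Mid_tl \<or> P Mid_tr \<or> P Lft \<or> P Mid_lr \<or> P Rgt"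
  by (metis junction.exhaust)

definition glue_edge :: "tstate \<Rightarrow> tstate \<Rightarrow> tstate \<Rightarrow> junction \<Rightarrow> junction \<Rightarrow> bool" where
  "glue_edge s1 s2 s3 x y \<longleftrightarrow>
     (\<exists>i<3. \<exists>k<3. \<exists>k'<3. x = corner i k \<and> y = corner i k' \<and> tstate_joins (nth3 s1 s2 s3 i) k k')"

text \<open>A representative of the component of each junction. The three middle junctions form a
  triangle whose sides lie in the three copies, so two of them are joined either directly or
  through the third.\<close>

definition glue_rep :: "tstate \<Rightarrow> tstate \<Rightarrow> tstate \<Rightarrow> junction \<Rightarrow> junction" where
  "glue_rep s1 s2 s3 x =
    (let tl_tr = joins_lr s1 \<or> (joins_tr s2 \<and> joins_tl s3);
         tl_lr = joins_tr s2 \<or> (joins_lr s1 \<and> joins_tl s3);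
         tr_lr = joins_tl s3 \<or> (joins_lr s1 \<and> joins_tr s2);
         rep_tr = (if tl_tr then Mid_tl else Mid_tr);
         rep_lr = (if tl_lr then Mid_tl else if tr_lr then Mid_tr else Mid_lr)
     in case x of
       Mid_tl \<Rightarrow> Mid_tl | Mid_tr \<Rightarrow> rep_tr | Mid_lr \<Rightarrow> rep_lr
     | Top \<Rightarrow> (if joins_tl s1 then Mid_tl else if joins_tr s1 then rep_tr else Top)
     | Lft \<Rightarrow> (if joins_tl s2 then Mid_tl else if joins_lr s2 then rep_lr else Lft)
     | Rgt \<Rightarrow> (if joins_tr s3 then rep_tr else if joins_lr s3 then rep_lr else Rgt))"

lemma glue_edge_iff: "glue_edge s1 s2 s3 x y \<longleftrightarrow> x = y
   \<or> (joins_tl s1 \<and> {x,y} = {Top,Mid_tl}) \<or> (joins_tr s1 \<and> {x,y} = {Top,Mid_tr})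
   \<or> (joins_lr s1 \<and> {x,y} = {Mid_tl,Mid_tr})
   \<or> (joins_tl s2 \<and> {x,y} = {Mid_tl,Lft}) \<or> (joins_tr s2 \<and> {x,y} = {Mid_tl,Mid_lr})
   \<or> (joins_lr s2 \<and> {x,y} = {Lft,Mid_lr})
   \<or> (joins_tl s3 \<and> {x,y} = {Mid_tr,Mid_lr}) \<or> (joins_tr s3 \<and> {x,y} = {Mid_tr,Rgt})
   \<or> (joins_lr s3 \<and> {x,y} = {Mid_lr,Rgt})"
  unfolding glue_edge_def ex_less_3
  by (simp add: corner_def tstate_joins_def nth3_def doubleton_eq_iff ex_less_3
      conj_disj_distribL conj_disj_distribR ex_disj_distrib) (cases x; cases y; simp)

lemma glue_edge_sym: "symp (glue_edge s1 s2 s3)"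
  unfolding glue_edge_iff symp_def by (auto simp: insert_commute)

lemma glue_rep_edge:
  "joins_tl s1 \<Longrightarrow> glue_rep s1 s2 s3 Top = glue_rep s1 s2 s3 Mid_tl"
  "joins_tr s1 \<Longrightarrow> glue_rep s1 s2 s3 Top = glue_rep s1 s2 s3 Mid_tr"
  "joins_lr s1 \<Longrightarrow> glue_rep s1 s2 s3 Mid_tl = glue_rep s1 s2 s3 Mid_tr"
  "joins_tl s2 \<Longrightarrow> glue_rep s1 s2 s3 Mid_tl = glue_rep s1 s2 s3 Lft"
  "joins_tr s2 \<Longrightarrow> glue_rep s1 s2 s3 Mid_tl = glue_rep s1 s2 s3 Mid_lr"
  "joins_lr s2 \<Longrightarrow> glue_rep s1 s2 s3 Lft = glue_rep s1 s2 s3 Mid_lr"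
  "joins_tl s3 \<Longrightarrow> glue_rep s1 s2 s3 Mid_tr = glue_rep s1 s2 s3 Mid_lr"
  "joins_tr s3 \<Longrightarrow> glue_rep s1 s2 s3 Mid_tr = glue_rep s1 s2 s3 Rgt"
  "joins_lr s3 \<Longrightarrow> glue_rep s1 s2 s3 Mid_lr = glue_rep s1 s2 s3 Rgt"
  by (auto simp: glue_rep_def Let_def dest: joins_transitive)

lemma glue_edge_rep:
  "glue_edge s1 s2 s3 x y \<Longrightarrow> glue_rep s1 s2 s3 x = glue_rep s1 s2 s3 y"
  unfolding glue_edge_iff doubleton_eq_iff using glue_rep_edge by metis

lemma glue_reaches_rep: "(glue_edge s1 s2 s3)\<^sup>*\<^sup>* x (glue_rep s1 s2 s3 x)"
proof -
  let ?E = "glue_edge s1 s2 s3"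
  have step: "?E\<^sup>*\<^sup>* x z" if "?E x y" "?E\<^sup>*\<^sup>* y z" for x y z
    using that by (rule converse_rtranclp_into_rtranclp)
  have tl_tr: "?E Mid_tl Mid_tr" "?E Mid_tr Mid_tl" if "joins_lr s1"
    using that by (simp_all add: glue_edge_iff insert_commute)
  have tl_lr: "?E Mid_tl Mid_lr" "?E Mid_lr Mid_tl" if "joins_tr s2"
    using that by (simp_all add: glue_edge_iff insert_commute)
  have tr_lr: "?E Mid_tr Mid_lr" "?E Mid_lr Mid_tr" if "joins_tl s3"
    using that by (simp_all add: glue_edge_iff insert_commute)
  have mid_tr: "?E\<^sup>*\<^sup>* Mid_tr (glue_rep s1 s2 s3 Mid_tr)"
    using tl_tr tl_lr tr_lr by (auto simp: glue_rep_def Let_def intro: step)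
  have mid_lr: "?E\<^sup>*\<^sup>* Mid_lr (glue_rep s1 s2 s3 Mid_lr)"
    using tl_tr tl_lr tr_lr by (auto simp: glue_rep_def Let_def intro: step)
  show ?thesis
  proof (cases x)
    case Top
    then show ?thesis using mid_tr
      by (auto simp: glue_rep_def Let_def glue_edge_iff intro: step)
  next
    case Lft
    then show ?thesis using mid_lr
      by (auto simp: glue_rep_def Let_def glue_edge_iff intro: step)
  next
    case Rgt
    then show ?thesis using mid_tr mid_lr
      by (auto simp: glue_rep_def Let_def glue_edge_iff insert_commute intro: step)
  qed (use mid_tr mid_lr in \<open>simp_all add: glue_rep_def\<close>)
qed

lemma glue_connected_iff:
  "(glue_edge s1 s2 s3)\<^sup>*\<^sup>* x y \<longleftrightarrow> glue_rep s1 s2 s3 x = glue_rep s1 s2 s3 y"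
proof
  assume "(glue_edge s1 s2 s3)\<^sup>*\<^sup>* x y"
  then show "glue_rep s1 s2 s3 x = glue_rep s1 s2 s3 y"
    by (induction rule: rtranclp_induct) (auto dest: glue_edge_rep)
next
  assume "glue_rep s1 s2 s3 x = glue_rep s1 s2 s3 y"
  moreover have "symp (glue_edge s1 s2 s3)\<^sup>*\<^sup>*"
    by (rule symp_rtranclp[OF glue_edge_sym])
  ultimately show "(glue_edge s1 s2 s3)\<^sup>*\<^sup>* x y"
    using glue_reaches_rep[of s1 s2 s3 x] glue_reaches_rep[of s1 s2 s3 y]
    by (metis (no_types, lifting) rtranclp_trans sympD)
qed

definition glue_rooted :: "tstate \<Rightarrow> tstate \<Rightarrow> tstate \<Rightarrow> bool" where
  "glue_rooted s1 s2 s3 \<longleftrightarrow> (\<forall>x\<in>{Top,Mid_tl,Mid_tr,Lft,Mid_lr,Rgt}.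
     glue_rep s1 s2 s3 x \<in> {glue_rep s1 s2 s3 Top, glue_rep s1 s2 s3 Lft, glue_rep s1 s2 s3 Rgt})"

definition glue_tstate :: "tstate \<Rightarrow> tstate \<Rightarrow> tstate \<Rightarrow> tstate" where
  "glue_tstate s1 s2 s3 =
     tstate_mk (glue_rep s1 s2 s3 Top = glue_rep s1 s2 s3 Lft)
       (glue_rep s1 s2 s3 Top = glue_rep s1 s2 s3 Rgt) (glue_rep s1 s2 s3 Lft = glue_rep s1 s2 s3 Rgt)"

definition glue_blocks :: "tstate \<Rightarrow> tstate \<Rightarrow> tstate \<Rightarrow> nat" where
  "glue_blocks s1 s2 s3 = card (glue_rep s1 s2 s3 ` {Top,Mid_tl,Mid_tr,Lft,Mid_lr,Rgt})"

text \<open>Gluing identifies three pairs of vertices; the identifications that do not merge components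
  close independent cycles.\<close>

definition glue_nullity :: "tstate \<Rightarrow> tstate \<Rightarrow> tstate \<Rightarrow> nat" where
  "glue_nullity s1 s2 s3 = 3 + glue_blocks s1 s2 s3 - (nblocks s1 + nblocks s2 + nblocks s3)"

definition glue_factor :: "real \<Rightarrow> tstate \<Rightarrow> tstate \<Rightarrow> tstate \<Rightarrow> tstate \<Rightarrow> real" where
  "glue_factor y s s1 s2 s3 =
     (if glue_rooted s1 s2 s3 \<and> glue_tstate s1 s2 s3 = s then (y - 1) ^ glue_nullity s1 s2 s3 else 0)"

lemma glue_blocks_ge:
  "glue_rooted s1 s2 s3 \<Longrightarrow> nblocks s1 + nblocks s2 + nblocks s3 \<le> 3 + glue_blocks s1 s2 s3"
  by (cases s1; cases s2; cases s3;
      simp add: glue_rooted_def glue_blocks_def glue_rep_def card_insert_if)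

lemma glue_blocks_le_6: "glue_blocks s1 s2 s3 \<le> 6"
  unfolding glue_blocks_def by (rule order.trans[OF card_image_le]) simp_all

text \<open>The recursion closes on the weights of Joined, Top_apart and Apart only because, by the
  rotational symmetry of the Sierpinski graphs, the three states with one outmost vertex apart have
  the same weight.\<close>

lemma sum_glue_factor:
  fixes W :: "tstate \<Rightarrow> real"
  assumes "W Lft_apart = W Top_apart" "W Rgt_apart = W Top_apart"
  shows "(\<Sum>s1\<in>UNIV. \<Sum>s2\<in>UNIV. \<Sum>s3\<in>UNIV. glue_factor y s s1 s2 s3 * W s1 * W s2 * W s3) =
    (case s of
      Joined \<Rightarrow> (y - 1) * W Joined ^ 3 + 6 * W Joined ^ 2 * W Top_apart
    | Apart \<Rightarrow> 3 * (y - 1) * W Joined * W Top_apart ^ 2 + 12 * W Joined * W Top_apart * W Apart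
        + 14 * W Top_apart ^ 3
    | _ \<Rightarrow> (y - 1) * W Joined ^ 2 * W Top_apart + W Joined ^ 2 * W Apart + 7 * W Joined * W Top_apart ^ 2)"
  using assms
  by (cases s; simp add: UNIV_tstate glue_factor_def glue_rooted_def glue_tstate_def
        glue_nullity_def glue_blocks_def glue_rep_def tstate_mk_def card_insert_if;
      simp add: algebra_simps power3_eq_cube power2_eq_square)

section \<open>Components of spanning subgraphs\<close>

lemma power_split_complement:
  fixes p :: real
  assumes "r \<le> c" "c \<le> m" "p \<noteq> 1"
  shows "p ^ c * (1 - p) ^ (m - c) = p ^ r * (1 - p) ^ (m - r) * (p / (1 - p)) ^ (c - r)"
proof -
  obtain k j where "c = r + k" "m = c + j"
    using assms(1,2) le_Suc_ex by metis
  then show ?thesis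
    using assms(3) by (simp add: power_add power_divide field_simps)
qed

lemma rtranclp_map:
  assumes "\<And>a b. R a b \<Longrightarrow> R' (h a) (h b)" "R\<^sup>*\<^sup>* x y"
  shows "R'\<^sup>*\<^sup>* (h x) (h y)"
  using assms(2)
  by (induction rule: rtranclp_induct) (auto intro: rtranclp.rtrancl_into_rtrancl assms(1))

lemma rtranclp_closed:
  assumes "\<And>a b. R a b \<Longrightarrow> a \<in> X \<Longrightarrow> b \<in> X" "R\<^sup>*\<^sup>* x y" "x \<in> X"
  shows "y \<in> X"
  using assms(2,3) by (induction rule: rtranclp_induct) (auto intro: assms(1))

lemma rtranclp_lift:
  assumes "\<And>a b. R a b \<Longrightarrow> R'\<^sup>*\<^sup>* a b" "R\<^sup>*\<^sup>* x y"
  shows "R'\<^sup>*\<^sup>* x y"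
  using assms(2) by (induction rule: rtranclp_induct) (auto intro: rtranclp_trans assms(1))

lemma card_image_eq_kernel:
  assumes "\<And>a b. a \<in> Q \<Longrightarrow> b \<in> Q \<Longrightarrow> f a = f b \<longleftrightarrow> g a = g b"
  shows "card (f ` Q) = card (g ` Q)"
proof -
  define h where "h z = g (inv_into Q f z)" for z
  have h: "h (f a) = g a" if "a \<in> Q" for a
    using assms[OF inv_into_into[of "f a" f Q] that] f_inv_into_f[of "f a" f Q] that
    unfolding h_def by blast
  then have "g ` Q = h ` f ` Q"
    by (force simp: image_image)
  moreover have "inj_on h (f ` Q)"
    using h assms by (auto simp: inj_on_def)
  ultimately show ?thesis by (simp add: card_image)
qed

lemma sum_by_class:
  fixes h :: "'b \<Rightarrow> real"
  assumes "finite P" "finite (UNIV :: 'b set)"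
  shows "(\<Sum>A\<in>P. if r A then h (t A) * a A else 0) = (\<Sum>s\<in>UNIV. h s * (\<Sum>A | A \<in> P \<and> r A \<and> t A = s. a A))"
proof -
  have "(\<Sum>A\<in>P. if r A then h (t A) * a A else 0) = (\<Sum>A\<in>P. \<Sum>s\<in>UNIV. if r A \<and> t A = s then h s * a A else 0)"
    using assms(2) by (intro sum.cong) (auto simp: sum.delta')
  also have "\<dots> = (\<Sum>s\<in>UNIV. \<Sum>A\<in>P. if r A \<and> t A = s then h s * a A else 0)"
    by (rule sum.swap)
  also have "\<dots> = (\<Sum>s\<in>UNIV. h s * (\<Sum>A | A \<in> P \<and> r A \<and> t A = s. a A))"
    using assms(1) by (simp add: sum.inter_filter[symmetric] sum_distrib_left conj_assoc)
  finally show ?thesis .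
qed

lemma sum_by_class3:
  fixes f :: "'b \<Rightarrow> 'b \<Rightarrow> 'b \<Rightarrow> real"
  assumes "finite P" "finite (UNIV :: 'b set)"
    and W: "\<And>s. W s = (\<Sum>A | A \<in> P \<and> r A \<and> t A = s. a A)"
  shows "(\<Sum>A\<in>P. \<Sum>B\<in>P. \<Sum>C\<in>P.
            if r A \<and> r B \<and> r C then f (t A) (t B) (t C) * (a A * a B * a C) else 0)
       = (\<Sum>s1\<in>UNIV. \<Sum>s2\<in>UNIV. \<Sum>s3\<in>UNIV. f s1 s2 s3 * W s1 * W s2 * W s3)"
proof -
  note by_class = sum_by_class[OF assms(1,2), of r _ t a, unfolded W[symmetric]]
  let ?f = "\<lambda>A B C. if r A \<and> r B \<and> r C then f (t A) (t B) (t C) * (a A * a B * a C) else 0"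
  have "(\<Sum>C\<in>P. ?f A B C) = (if r A \<and> r B then
      \<Sum>C\<in>P. if r C then (f (t A) (t B) (t C) * (a A * a B)) * a C else 0 else 0)" for A B
    by (cases "r A \<and> r B") (auto simp: mult.assoc intro!: sum.cong sum.neutral)
  also have "\<dots> A B = (if r A \<and> r B then \<Sum>s3\<in>UNIV. (f (t A) (t B) s3 * (a A * a B)) * W s3 else 0)" for A B
    using by_class[of "\<lambda>s3. f (t A) (t B) s3 * (a A * a B)"] by simp
  also have "\<dots> A B = (if r A then
      if r B then (\<Sum>s3\<in>UNIV. f (t A) (t B) s3 * a A * W s3) * a B else 0 else 0)" for A B
    by (simp add: sum_distrib_left sum_distrib_right mult_ac)
  finally have inner: "(\<Sum>C\<in>P. ?f A B C) = (if r A then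
      if r B then (\<Sum>s3\<in>UNIV. f (t A) (t B) s3 * a A * W s3) * a B else 0 else 0)" for A B .
  have "(\<Sum>A\<in>P. \<Sum>B\<in>P. \<Sum>C\<in>P. ?f A B C) = (\<Sum>A\<in>P. if r A then
      \<Sum>B\<in>P. if r B then (\<Sum>s3\<in>UNIV. f (t A) (t B) s3 * a A * W s3) * a B else 0 else 0)"
    unfolding inner by (intro sum.cong refl) simp
  also have "\<dots> = (\<Sum>A\<in>P. if r A then
      \<Sum>s2\<in>UNIV. (\<Sum>s3\<in>UNIV. f (t A) s2 s3 * a A * W s3) * W s2 else 0)"
  proof (intro sum.cong refl)
    fix A
    show "(if r A then \<Sum>B\<in>P. if r B then (\<Sum>s3\<in>UNIV. f (t A) (t B) s3 * a A * W s3) * a B else 0 else 0)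
      = (if r A then \<Sum>s2\<in>UNIV. (\<Sum>s3\<in>UNIV. f (t A) s2 s3 * a A * W s3) * W s2 else 0)"
      using by_class[of "\<lambda>s2. \<Sum>s3\<in>UNIV. f (t A) s2 s3 * a A * W s3"] by simp
  qed
  also have "\<dots> = (\<Sum>A\<in>P. if r A then
      (\<Sum>s2\<in>UNIV. \<Sum>s3\<in>UNIV. f (t A) s2 s3 * W s2 * W s3) * a A else 0)"
    by (intro sum.cong refl) (simp add: sum_distrib_left sum_distrib_right mult_ac)
  also have "\<dots> = (\<Sum>s1\<in>UNIV. (\<Sum>s2\<in>UNIV. \<Sum>s3\<in>UNIV. f s1 s2 s3 * W s2 * W s3) * W s1)"
    by (rule by_class)
  finally show ?thesis
    by (simp add: sum_distrib_left sum_distrib_right mult_ac)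
qed

lemma quotient_eq_classes:
  assumes "equiv V R" "Q \<subseteq> V" "\<forall>X\<in>V//R. X \<inter> Q \<noteq> {}"
  shows "V//R = (\<lambda>q. R``{q}) ` Q"
proof
  show "(\<lambda>q. R``{q}) ` Q \<subseteq> V//R" using assms(2) by (auto intro: quotientI)
  show "V//R \<subseteq> (\<lambda>q. R``{q}) ` Q"
  proof
    fix X assume X: "X \<in> V//R"
    then obtain x where x: "X = R``{x}" "x \<in> V" by (auto elim: quotientE)
    from assms(3) X obtain q where q: "q \<in> X" "q \<in> Q" by auto
    then have "R``{x} = R``{q}" using x assms(1) by (simp add: equiv_class_eq)
    then show "X \<in> (\<lambda>q. R``{q}) ` Q" using x q by auto
  qed
qed

lemma adj_in:
  assumes "\<And>i. i < length (edges G) \<Longrightarrow> fst (edges G ! i) \<in> verts G \<and> snd (edges G ! i) \<in> verts G"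
    and "adj G S a b"
  shows "a \<in> verts G \<and> b \<in> verts G"
  using assms unfolding adj_def by (metis fst_conv snd_conv)

lemma conn_equiv: "equiv (verts G) (conn G S)"
proof -
  have "symp (adj G S)" by (auto simp: symp_def adj_def)
  then have "symp (adj G S)\<^sup>*\<^sup>*" by (rule symp_rtranclp)
  then show ?thesis
    unfolding equiv_def refl_on_def sym_def trans_def conn_def
    by (auto intro: rtranclp_trans dest: sympD)
qed

lemma conn_sym: "(u,v) \<in> conn G S \<Longrightarrow> (v,u) \<in> conn G S"
  using conn_equiv[of G S] unfolding equiv_def sym_def by blast

lemma conn_trans:
  "(u,v) \<in> conn G S \<Longrightarrow> (v,w) \<in> conn G S \<Longrightarrow> (u,w) \<in> conn G S"
  using conn_equiv[of G S] unfolding equiv_def trans_def by blast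

lemma conn_refl: "u \<in> verts G \<Longrightarrow> (u,u) \<in> conn G S"
  unfolding conn_def by simp

lemma conn_in: "(u,v) \<in> conn G S \<Longrightarrow> u \<in> verts G \<and> v \<in> verts G"
  unfolding conn_def by simp

lemma conn_triangle_iff:
  assumes adj: "\<And>x y. adj G S x y \<longleftrightarrow> (ab \<in> S \<and> (x, y) \<in> {(a, b), (b, a)})
      \<or> (ac \<in> S \<and> (x, y) \<in> {(a, c), (c, a)}) \<or> (bc \<in> S \<and> (x, y) \<in> {(b, c), (c, b)})"
    and verts: "a \<in> verts G" "b \<in> verts G" "c \<in> verts G" and distinct: "distinct [a, b, c]"
  shows "(a, b) \<in> conn G S \<longleftrightarrow> ab \<in> S \<or> (ac \<in> S \<and> bc \<in> S)"
proof
  assume "ab \<in> S \<or> (ac \<in> S \<and> bc \<in> S)"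
  moreover have "adj G S a b" if "ab \<in> S" using that adj[of a b] by simp
  moreover have "adj G S a c" if "ac \<in> S" using that adj[of a c] by simp
  moreover have "adj G S c b" if "bc \<in> S" using that adj[of c b] by simp
  ultimately have "(adj G S)\<^sup>*\<^sup>* a b"
    by (meson r_into_rtranclp converse_rtranclp_into_rtranclp)
  then show "(a, b) \<in> conn G S"
    unfolding conn_def using verts by blast
next
  assume "(a, b) \<in> conn G S"
  then have path: "(adj G S)\<^sup>*\<^sup>* a b"
    unfolding conn_def by blast
  show "ab \<in> S \<or> (ac \<in> S \<and> bc \<in> S)"
  proof (rule ccontr)
    assume no_path: "\<not> (ab \<in> S \<or> (ac \<in> S \<and> bc \<in> S))"
    let ?X = "if ac \<in> S then {a, c} else {a}"
    have "y \<in> ?X" if "adj G S x y" "x \<in> ?X" for x y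
      using that no_path distinct unfolding adj by (cases "ac \<in> S") auto
    then have "b \<in> ?X"
      using rtranclp_closed[OF _ path] by auto
    then show False
      using distinct by (auto split: if_splits)
  qed
qed

definition outmost :: "sgraph \<Rightarrow> nat set" where "outmost G = {top G, lft G, rgt G}"

definition rooted :: "sgraph \<Rightarrow> nat set \<Rightarrow> bool" where
  "rooted G S = (S \<subseteq> edge_ids G \<and> (\<forall>X\<in>verts G // conn G S. X \<inter> outmost G \<noteq> {}))"

definition tstate_of :: "sgraph \<Rightarrow> nat set \<Rightarrow> tstate" where
  "tstate_of G S = tstate_mk ((top G, lft G) \<in> conn G S) ((top G, rgt G) \<in> conn G S) ((lft G, rgt G) \<in> conn G S)"

definition rooted_weight :: "sgraph \<Rightarrow> real \<Rightarrow> tstate \<Rightarrow> real" where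
  "rooted_weight G y s = (\<Sum>S | rooted G S \<and> tstate_of G S = s. (y - 1) ^ nul G S)"

text \<open>True for every graph; it is only needed for the Sierpinski graphs, where it is inherited
  along the construction and is what keeps the truncated subtraction in nul exact.\<close>

definition rooted_rank_le_card :: "sgraph \<Rightarrow> bool" where
  "rooted_rank_le_card G = (\<forall>S. rooted G S \<longrightarrow> rk G S \<le> card S)"

lemma rooted_iff_reaches_outmost:
  "rooted G S \<longleftrightarrow> S \<subseteq> edge_ids G \<and> (\<forall>u\<in>verts G. \<exists>w\<in>outmost G. (u, w) \<in> conn G S)"
  unfolding rooted_def quotient_def by (auto simp: Image_def)

lemma finite_edge_ids: "finite (edge_ids G)"
  by (simp add: edge_ids_def)

lemma rooted_weight_eq_sum:
  "rooted_weight G y s = (\<Sum>S\<in>Pow (edge_ids G). if rooted G S \<and> tstate_of G S = s then (y - 1) ^ nul G S else 0)"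
proof -
  have "{S. rooted G S \<and> tstate_of G S = s} = {S \<in> Pow (edge_ids G). rooted G S \<and> tstate_of G S = s}"
    by (auto simp: rooted_def)
  then show ?thesis
    unfolding rooted_weight_def using sum.inter_filter[OF finite_Pow_iff[THEN iffD2, OF finite_edge_ids]]
    by simp
qed

lemma rooted_weight_by_class:
  "rooted_weight G y s = (\<Sum>S | S \<in> Pow (edge_ids G) \<and> rooted G S \<and> tstate_of G S = s. (y - 1) ^ nul G S)"
  unfolding rooted_weight_def by (rule sum.cong) (auto simp: rooted_def)

locale three_terminal =
  fixes G :: sgraph
  assumes finite_verts: "finite (verts G)"
    and top_in: "top G \<in> verts G" and lft_in: "lft G \<in> verts G" and rgt_in: "rgt G \<in> verts G"
    and top_ne_lft: "top G \<noteq> lft G" and top_ne_rgt: "top G \<noteq> rgt G" and lft_ne_rgt: "lft G \<noteq> rgt G"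
    and edge_in_verts: "\<And>i. i < length (edges G) \<Longrightarrow> fst (edges G ! i) \<in> verts G \<and> snd (edges G ! i) \<in> verts G"
begin

lemma joins_tstate_of:
  "joins_tl (tstate_of G S) \<longleftrightarrow> (top G, lft G) \<in> conn G S"
  "joins_tr (tstate_of G S) \<longleftrightarrow> (top G, rgt G) \<in> conn G S"
  "joins_lr (tstate_of G S) \<longleftrightarrow> (lft G, rgt G) \<in> conn G S"
proof -
  let ?a = "(top G, lft G) \<in> conn G S" and ?b = "(top G, rgt G) \<in> conn G S" and ?c = "(lft G, rgt G) \<in> conn G S"
  have 1: "?c" if a: "?a" and b: "?b" using conn_trans[OF conn_sym[OF a] b] .
  have 2: "?b" if a: "?a" and c: "?c" using conn_trans[OF a c] .
  have 3: "?a" if b: "?b" and c: "?c" using conn_trans[OF b conn_sym[OF c]] .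
  show "joins_tl (tstate_of G S) \<longleftrightarrow> ?a" "joins_tr (tstate_of G S) \<longleftrightarrow> ?b" "joins_lr (tstate_of G S) \<longleftrightarrow> ?c"
    unfolding tstate_of_def using joins_tstate_mk[of ?a ?b ?c] 1 2 3 by blast+
qed

lemma card_verts_ge_3: "3 \<le> card (verts G)"
proof -
  have "card {top G, lft G, rgt G} = 3" using top_ne_lft top_ne_rgt lft_ne_rgt by simp
  moreover have "card {top G, lft G, rgt G} \<le> card (verts G)"
    using top_in lft_in rgt_in by (intro card_mono[OF finite_verts]) simp
  ultimately show ?thesis by simp
qed

lemma finite_components: "finite (verts G // conn G S)"
  using finite_verts by (rule finite_quotient) (auto simp: conn_def)

lemma ncomp_le_card: "ncomp G S \<le> card (verts G)"
proof -
  have "verts G // conn G S = (\<lambda>q. conn G S``{q}) ` verts G"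
    unfolding quotient_def by auto
  then show ?thesis unfolding ncomp_def using finite_verts card_image_le by metis
qed

lemma ncomp_pos: "1 \<le> ncomp G S"
proof -
  have "conn G S``{top G} \<in> verts G // conn G S" using top_in by (rule quotientI)
  then have ne: "verts G // conn G S \<noteq> {}" by (metis empty_iff)
  have "card (verts G // conn G S) > 0" using finite_components[of S] ne card_gt_0_iff by blast
  then show ?thesis unfolding ncomp_def by linarith
qed

lemma conn_class_in: "a \<in> verts G \<Longrightarrow> conn G S``{a} \<in> verts G // conn G S"
  by (rule quotientI)

lemma conn_class_eq:
  "a \<in> verts G \<Longrightarrow> b \<in> verts G \<Longrightarrow> conn G S``{a} = conn G S``{b} \<longleftrightarrow> (a,b) \<in> conn G S"
  by (rule eq_equiv_class_iff[OF conn_equiv])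

lemma card_outmost_classes:
  "card {conn G S``{top G}, conn G S``{lft G}, conn G S``{rgt G}} = nblocks (tstate_of G S)"
proof -
  let ?R = "conn G S"
  have tl: "?R``{top G} = ?R``{lft G} \<longleftrightarrow> joins_tl (tstate_of G S)"
    using conn_class_eq[OF top_in lft_in] joins_tstate_of(1) by simp
  have tr: "?R``{top G} = ?R``{rgt G} \<longleftrightarrow> joins_tr (tstate_of G S)"
    using conn_class_eq[OF top_in rgt_in] joins_tstate_of(2) by simp
  have lr: "?R``{lft G} = ?R``{rgt G} \<longleftrightarrow> joins_lr (tstate_of G S)"
    using conn_class_eq[OF lft_in rgt_in] joins_tstate_of(3) by simp
  show ?thesis
  proof (cases "tstate_of G S")
    case Joined then show ?thesis using tl tr by simp
  qed (use tl tr lr in \<open>simp_all add: card_insert_if\<close>)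
qed

lemma outmost_classes_subset:
  "{conn G S``{top G}, conn G S``{lft G}, conn G S``{rgt G}} \<subseteq> verts G // conn G S"
  using conn_class_in[OF top_in] conn_class_in[OF lft_in] conn_class_in[OF rgt_in] by simp

lemma nblocks_le_ncomp: "nblocks (tstate_of G S) \<le> ncomp G S"
  unfolding ncomp_def card_outmost_classes[symmetric]
  by (rule card_mono[OF finite_components outmost_classes_subset])

lemma rooted_iff_ncomp:
  assumes "S \<subseteq> edge_ids G"
  shows "rooted G S \<longleftrightarrow> ncomp G S = nblocks (tstate_of G S)"
proof -
  let ?R = "conn G S"
  let ?C = "{?R``{top G}, ?R``{lft G}, ?R``{rgt G}}"
  have outmost: "outmost G \<subseteq> verts G"
    using top_in lft_in rgt_in by (simp add: outmost_def)
  have "rooted G S \<longleftrightarrow> verts G // ?R = ?C"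
  proof
    assume "rooted G S"
    then have "verts G // ?R = (\<lambda>q. ?R``{q}) ` outmost G"
      using quotient_eq_classes[OF conn_equiv outmost] unfolding rooted_def by blast
    then show "verts G // ?R = ?C"
      unfolding outmost_def by simp
  next
    assume C: "verts G // ?R = ?C"
    have "X \<inter> outmost G \<noteq> {}" if "X \<in> ?C" for X
    proof -
      obtain q where "q \<in> outmost G" "X = ?R``{q}"
        using \<open>X \<in> ?C\<close> unfolding outmost_def by blast
      then show ?thesis using conn_refl outmost by blast
    qed
    then show "rooted G S"
      using assms unfolding rooted_def C by blast
  qed
  also have "\<dots> \<longleftrightarrow> card (verts G // ?R) = card ?C"
    using card_subset_eq[OF finite_components outmost_classes_subset, of S] by fastforce
  finally show ?thesis
    unfolding ncomp_def card_outmost_classes .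
qed

lemma ncomp_rooted: "rooted G S \<Longrightarrow> ncomp G S = nblocks (tstate_of G S)"
  using rooted_iff_ncomp rooted_def by blast

end

section \<open>One step of the Sierpinski construction\<close>

lemma less_mult_3_iff:
  "k < 3 * m \<longleftrightarrow> (\<exists>i<3. \<exists>j<m. k = i * m + (j::nat))"
proof
  assume "k < 3 * m"
  then show "\<exists>i<3. \<exists>j<m. k = i * m + j"
    by (intro exI[of _ "k div m"] conjI exI[of _ "k mod m"]) (auto simp: less_mult_imp_div_less)
next
  assume "\<exists>i<3. \<exists>j<m. k = i * m + j"
  then obtain i j where "i < 3" "j < m" "k = i * m + j" by blast
  moreover have "i * m + j < (i + 1) * m" using \<open>j < m\<close> by simp
  moreover have "(i + 1) * m \<le> 3 * m" using \<open>i < 3\<close> by (intro mult_right_mono) auto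
  ultimately show "k < 3 * m" by linarith
qed

lemma three_mult_neq:
  fixes a b :: nat
  shows "3 * a \<noteq> Suc (3 * b)" "Suc (3 * a) \<noteq> 3 * b"
    "3 * a \<noteq> Suc (Suc (3 * b))" "Suc (Suc (3 * a)) \<noteq> 3 * b"
    "Suc (3 * a) \<noteq> Suc (Suc (3 * b))" "Suc (Suc (3 * a)) \<noteq> Suc (3 * b)"
  by presburger+

context three_terminal begin

definition copy_map :: "nat \<Rightarrow> nat \<Rightarrow> nat" where
  "copy_map i v = (if i = 0 then 3*v else if i = 1 then (if v = top G then 3 * lft G else 3*v+1)
            else (if v = top G then 3 * rgt G else if v = lft G then 3 * rgt G + 1 else 3*v+2))"

definition junction_vertex :: "junction \<Rightarrow> nat" where
  "junction_vertex x = (case x of Top \<Rightarrow> 3 * top G | Mid_tl \<Rightarrow> 3 * lft G | Mid_tr \<Rightarrow> 3 * rgt G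
     | Lft \<Rightarrow> 3 * lft G + 1 | Mid_lr \<Rightarrow> 3 * rgt G + 1 | Rgt \<Rightarrow> 3 * rgt G + 2)"

definition outmost_vertex :: "nat \<Rightarrow> nat" where
  "outmost_vertex k = (if k = 0 then top G else if k = 1 then lft G else rgt G)"

definition copy_edges :: "nat \<Rightarrow> nat set \<Rightarrow> nat set" where
  "copy_edges i S' = {j. j < length (edges G) \<and> i * length (edges G) + j \<in> S'}"

definition copy_conn :: "nat \<Rightarrow> nat set \<Rightarrow> nat \<Rightarrow> nat \<Rightarrow> bool" where
  "copy_conn i S' u v = (\<exists>a b. u = copy_map i a \<and> v = copy_map i b \<and> (a,b) \<in> conn G (copy_edges i S'))"

definition glued_conn :: "nat set \<Rightarrow> nat \<Rightarrow> nat \<Rightarrow> bool" where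
  "glued_conn S' u v = (\<exists>i<3. copy_conn i S' u v)"

lemma copy_map_0: "copy_map 0 = (\<lambda>v. 3*v)" by (rule ext) (simp add: copy_map_def)

lemma copy_map_1:
  "copy_map 1 = (\<lambda>v. if v = top G then 3 * lft G else 3*v+1)"
  by (rule ext) (simp add: copy_map_def)

lemma copy_map_2:
  "copy_map 2 = (\<lambda>v. if v = top G then 3 * rgt G else if v = lft G then 3 * rgt G + 1 else 3*v+2)"
  by (rule ext) (simp add: copy_map_def)

lemma verts_sier_step:
  "verts (sier_step G) = copy_map 0 ` verts G \<union> copy_map 1 ` verts G \<union> copy_map 2 ` verts G"
  unfolding sier_step_def Let_def copy_map_0 copy_map_1 copy_map_2 by simp

lemma edges_sier_step: "edges (sier_step G) = map (map_prod (copy_map 0) (copy_map 0)) (edges G)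
   @ map (map_prod (copy_map 1) (copy_map 1)) (edges G) @ map (map_prod (copy_map 2) (copy_map 2)) (edges G)"
  unfolding sier_step_def Let_def copy_map_0 copy_map_1 copy_map_2 by simp

lemma top_sier_step:
  "top (sier_step G) = junction_vertex Top" and lft_sier_step: "lft (sier_step G) = junction_vertex Lft"
  and rgt_sier_step: "rgt (sier_step G) = junction_vertex Rgt"
  unfolding sier_step_def Let_def junction_vertex_def using top_ne_lft top_ne_rgt lft_ne_rgt by auto

lemma inj_copy_map: "inj (copy_map i)"
  unfolding inj_def copy_map_def using top_ne_lft by (auto simp: three_mult_neq split: if_splits)

lemma copy_map_outmost_vertex:
  "i < 3 \<Longrightarrow> k < 3 \<Longrightarrow> copy_map i (outmost_vertex k) = junction_vertex (corner i k)"
  using top_ne_lft top_ne_rgt lft_ne_rgt unfolding numeral_3_eq_3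
  by (auto simp: copy_map_def outmost_vertex_def junction_vertex_def corner_def less_Suc_eq)

lemma copy_map_eq_junction_vertex:
  assumes "i < 3" "copy_map i a = junction_vertex x"
  shows "\<exists>k<3. a = outmost_vertex k \<and> x = corner i k"
  using less_3_cases[OF assms(1)] assms(2) top_ne_lft top_ne_rgt lft_ne_rgt unfolding ex_less_3
  by (cases x; elim disjE; auto simp: copy_map_def outmost_vertex_def junction_vertex_def corner_def three_mult_neq split: if_splits)

lemma copy_map_meet:
  assumes "i < 3" "j < 3" "i \<noteq> j" "copy_map i a = copy_map j b"
  shows "\<exists>x. copy_map i a = junction_vertex x"
  using less_3_cases[OF assms(1)] less_3_cases[OF assms(2)] assms(3,4) top_ne_lft top_ne_rgt lft_ne_rgt unfolding ex_junction
  by (elim disjE; auto simp: copy_map_def junction_vertex_def three_mult_neq split: if_splits)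

lemma length_edges_sier_step: "length (edges (sier_step G)) = 3 * length (edges G)"
  by (simp add: edges_sier_step)

lemma nth_edges_sier_step:
  assumes "i < 3" "j < length (edges G)"
  shows "edges (sier_step G) ! (i * length (edges G) + j) = map_prod (copy_map i) (copy_map i) (edges G ! j)"
  using less_3_cases[OF assms(1)] assms(2) by (auto simp: edges_sier_step nth_append)

lemma adj_sier_step:
  "adj (sier_step G) S' u v \<longleftrightarrow> (\<exists>i<3. \<exists>a b. u = copy_map i a \<and> v = copy_map i b \<and> adj G (copy_edges i S') a b)"
proof -
  let ?m = "length (edges G)"
  let ?e = "\<lambda>i j. map_prod (copy_map i) (copy_map i) (edges G ! j)"
  have "adj (sier_step G) S' u v \<longleftrightarrow>
      (\<exists>i<3. \<exists>j<?m. i * ?m + j \<in> S' \<and> (edges (sier_step G) ! (i * ?m + j) = (u, v)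
        \<or> edges (sier_step G) ! (i * ?m + j) = (v, u)))"
    unfolding adj_def length_edges_sier_step less_mult_3_iff by blast
  also have "\<dots> \<longleftrightarrow> (\<exists>i<3. \<exists>j\<in>copy_edges i S'. ?e i j = (u, v) \<or> ?e i j = (v, u))"
    by (simp add: copy_edges_def nth_edges_sier_step conj_assoc cong: conj_cong)
  also have "\<dots> \<longleftrightarrow> (\<exists>i<3. \<exists>a b. u = copy_map i a \<and> v = copy_map i b \<and> adj G (copy_edges i S') a b)"
  proof
    assume "\<exists>i<3. \<exists>j\<in>copy_edges i S'. ?e i j = (u, v) \<or> ?e i j = (v, u)"
    then obtain i j where ij: "i < 3" "j \<in> copy_edges i S'" "?e i j = (u, v) \<or> ?e i j = (v, u)"
      by blast
    obtain a b where "edges G ! j = (a, b)" by fastforce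
    with ij show "\<exists>i<3. \<exists>a b. u = copy_map i a \<and> v = copy_map i b \<and> adj G (copy_edges i S') a b"
      unfolding adj_def copy_edges_def by force
  next
    assume "\<exists>i<3. \<exists>a b. u = copy_map i a \<and> v = copy_map i b \<and> adj G (copy_edges i S') a b"
    then obtain i a b j where "i < 3" "u = copy_map i a" "v = copy_map i b" "j \<in> copy_edges i S'"
      "edges G ! j = (a, b) \<or> edges G ! j = (b, a)"
      unfolding adj_def by blast
    then have "?e i j = (u, v) \<or> ?e i j = (v, u)"
      by auto
    then show "\<exists>i<3. \<exists>j\<in>copy_edges i S'. ?e i j = (u, v) \<or> ?e i j = (v, u)"
      using \<open>i < 3\<close> \<open>j \<in> copy_edges i S'\<close> by blast
  qed
  finally show ?thesis .
qed

lemma adj_in_verts: "adj G S a b \<Longrightarrow> a \<in> verts G \<and> b \<in> verts G"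
  using adj_in[OF edge_in_verts] by blast

lemma conn_sier_step:
  "conn (sier_step G) S' = {(u,v). u \<in> verts (sier_step G) \<and> v \<in> verts (sier_step G) \<and> (glued_conn S')\<^sup>*\<^sup>* u v}"
proof -
  have adj_glued: "glued_conn S' u v" if a: "adj (sier_step G) S' u v" for u v
  proof -
    obtain i a b where "i<3" "u = copy_map i a" "v = copy_map i b" "adj G (copy_edges i S') a b"
      using a adj_sier_step by blast
    moreover then have "(a,b) \<in> conn G (copy_edges i S')"
      using adj_in_verts unfolding conn_def by blast
    ultimately show ?thesis unfolding glued_conn_def copy_conn_def by blast
  qed
  have glued_adj: "(adj (sier_step G) S')\<^sup>*\<^sup>* u v" if a: "glued_conn S' u v" for u v
  proof -
    obtain i a b where i: "i<3" "u = copy_map i a" "v = copy_map i b" "(a,b) \<in> conn G (copy_edges i S')"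
      using a unfolding glued_conn_def copy_conn_def by blast
    have "(adj G (copy_edges i S'))\<^sup>*\<^sup>* a b" using i(4) unfolding conn_def by blast
    then have "(adj (sier_step G) S')\<^sup>*\<^sup>* (copy_map i a) (copy_map i b)"
      by (rule rtranclp_map[rotated]) (use i(1) adj_sier_step in blast)
    then show ?thesis using i by simp
  qed
  have to_glued: "(glued_conn S')\<^sup>*\<^sup>* u v" if "(adj (sier_step G) S')\<^sup>*\<^sup>* u v" for u v
    using that by (rule rtranclp_lift[rotated]) (use adj_glued in blast)
  have to_adj: "(adj (sier_step G) S')\<^sup>*\<^sup>* u v" if "(glued_conn S')\<^sup>*\<^sup>* u v" for u v
    using that by (rule rtranclp_lift[rotated]) (use glued_adj in blast)
  show ?thesis unfolding conn_def using to_glued to_adj by blast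
qed

lemma copy_conn_in:
  "copy_conn i S' u v \<Longrightarrow> u \<in> copy_map i ` verts G \<and> v \<in> copy_map i ` verts G"
  unfolding copy_conn_def using conn_in by blast

lemma copy_conn_trans:
  "copy_conn i S' u v \<Longrightarrow> copy_conn i S' v w \<Longrightarrow> copy_conn i S' u w"
  unfolding copy_conn_def using inj_copy_map[of i] conn_trans by (metis injD)

lemma copy_conn_refl:
  "a \<in> verts G \<Longrightarrow> copy_conn i S' (copy_map i a) (copy_map i a)"
  unfolding copy_conn_def using conn_refl by blast

lemma junction_vertex_copy:
  "\<exists>i<3. \<exists>k<3. junction_vertex x = copy_map i (outmost_vertex k)"
proof -
  have "\<exists>i<3. \<exists>k<3. x = corner i k"
    unfolding ex_less_3 by (cases x) (auto simp: corner_def)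
  then show ?thesis using copy_map_outmost_vertex by metis
qed

lemma outmost_vertex_in: "outmost_vertex k \<in> verts G"
  using top_in lft_in rgt_in by (simp add: outmost_vertex_def)

lemma junction_vertex_in: "junction_vertex x \<in> verts (sier_step G)"
  using junction_vertex_copy[of x] outmost_vertex_in unfolding verts_sier_step ex_less_3 by auto

lemma verts_sier_step_iff:
  "u \<in> verts (sier_step G) \<longleftrightarrow> (\<exists>i<3. \<exists>a\<in>verts G. u = copy_map i a)"
  unfolding verts_sier_step ex_less_3 by auto

lemma tstate_joins_simps:
  "tstate_joins s k k"
  "tstate_joins s 0 1 = joins_tl s" "tstate_joins s 1 0 = joins_tl s"
  "tstate_joins s 0 2 = joins_tr s" "tstate_joins s 2 0 = joins_tr s"
  "tstate_joins s 1 2 = joins_lr s" "tstate_joins s 2 1 = joins_lr s"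
  by (auto simp: tstate_joins_def doubleton_eq_iff)

lemma conn_sym_iff: "(u,v) \<in> conn G S \<longleftrightarrow> (v,u) \<in> conn G S"
  using conn_sym by blast

lemma tstate_joins_conn:
  assumes "k < 3" "k' < 3"
  shows "tstate_joins (tstate_of G S) k k' \<longleftrightarrow> (outmost_vertex k, outmost_vertex k') \<in> conn G S"
proof -
  have o: "outmost_vertex 0 = top G" "outmost_vertex 1 = lft G" "outmost_vertex 2 = rgt G"
    by (auto simp: outmost_vertex_def)
  show ?thesis
    using less_3_cases[OF assms(1)] less_3_cases[OF assms(2)]
    by (elim disjE; simp only: o tstate_joins_simps joins_tstate_of conn_refl[OF top_in] conn_refl[OF lft_in]
        conn_refl[OF rgt_in];
      simp add: conn_sym_iff[of "lft G" "top G"] conn_sym_iff[of "rgt G" "top G"] conn_sym_iff[of "rgt G" "lft G"])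
qed

abbreviation on_copies :: "(tstate \<Rightarrow> tstate \<Rightarrow> tstate \<Rightarrow> 'a) \<Rightarrow> nat set \<Rightarrow> 'a" where
  "on_copies f S' \<equiv>
     f (tstate_of G (copy_edges 0 S')) (tstate_of G (copy_edges 1 S')) (tstate_of G (copy_edges 2 S'))"

lemma nth3_copy_edges: "i < 3 \<Longrightarrow> on_copies nth3 S' i = tstate_of G (copy_edges i S')"
  by (drule less_3_cases) (auto simp: nth3_def)

lemma glued_conn_junction_vertex:
  "glued_conn S' (junction_vertex x) (junction_vertex y) \<longleftrightarrow> on_copies glue_edge S' x y"
proof
  assume "glued_conn S' (junction_vertex x) (junction_vertex y)"
  then obtain i a b where i: "i<3" "junction_vertex x = copy_map i a" "junction_vertex y = copy_map i b"
    "(a,b) \<in> conn G (copy_edges i S')"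
    unfolding glued_conn_def copy_conn_def by blast
  obtain k k' where "k<3" "a = outmost_vertex k" "x = corner i k" "k'<3" "b = outmost_vertex k'" "y = corner i k'"
    using copy_map_eq_junction_vertex[OF i(1) i(2)[symmetric]] copy_map_eq_junction_vertex[OF i(1) i(3)[symmetric]]
    by blast
  then show "on_copies glue_edge S' x y"
    unfolding glue_edge_def using i tstate_joins_conn nth3_copy_edges by metis
next
  assume "on_copies glue_edge S' x y"
  then obtain i k k' where i: "i<3" "k<3" "k'<3" "x = corner i k" "y = corner i k'"
     "tstate_joins (tstate_of G (copy_edges i S')) k k'"
    unfolding glue_edge_def using nth3_copy_edges by metis
  then have "(outmost_vertex k, outmost_vertex k') \<in> conn G (copy_edges i S')"
    using tstate_joins_conn by blast
  then show "glued_conn S' (junction_vertex x) (junction_vertex y)"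
    unfolding glued_conn_def copy_conn_def using i copy_map_outmost_vertex by metis
qed

lemma copy_conn_switch:
  assumes "i < 3" "k < 3" "i \<noteq> k" "copy_conn i S' u v" "copy_conn k S' v w"
  shows "\<exists>z. v = junction_vertex z"
proof -
  obtain a b where "v = copy_map i a" "v = copy_map k b"
    using copy_conn_in[OF assms(4)] copy_conn_in[OF assms(5)] by blast
  then show ?thesis
    using copy_map_meet[OF assms(1-3)] by metis
qed

text \<open>A path in the glued graph changes copies only at junction vertices, so between its first and
  last junction it follows the gluing pattern.\<close>

lemma glued_path:
  assumes "(glued_conn S')\<^sup>*\<^sup>* u v" "u \<in> verts (sier_step G)"
  shows "(\<exists>i<3. copy_conn i S' u v)
    \<or> (\<exists>x y. (\<exists>i<3. copy_conn i S' u (junction_vertex x)) \<and> (on_copies glue_edge S')\<^sup>*\<^sup>* x y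
         \<and> (\<exists>j<3. copy_conn j S' (junction_vertex y) v))"
  using assms(1)
proof (induction rule: rtranclp_induct)
  case base
  then show ?case using assms(2) copy_conn_refl unfolding verts_sier_step_iff by blast
next
  case (step v w)
  from step(2) obtain k where k: "k < 3" "copy_conn k S' v w" unfolding glued_conn_def by blast
  from step(3) show ?case
  proof
    assume "\<exists>i<3. copy_conn i S' u v"
    then obtain i where i: "i < 3" "copy_conn i S' u v" by blast
    show ?case
    proof (cases "i = k")
      case True then show ?thesis using i k copy_conn_trans by blast
    next
      case False
      then obtain z where "v = junction_vertex z"
        using copy_conn_switch[OF i(1) k(1) _ i(2) k(2)] by blast
      then show ?thesis using i k by blast
    qed
  next
    assume "\<exists>x y. (\<exists>i<3. copy_conn i S' u (junction_vertex x)) \<and> (on_copies glue_edge S')\<^sup>*\<^sup>* x y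
      \<and> (\<exists>j<3. copy_conn j S' (junction_vertex y) v)"
    then obtain x y i j where h: "i<3" "copy_conn i S' u (junction_vertex x)"
      "(on_copies glue_edge S')\<^sup>*\<^sup>* x y" "j<3" "copy_conn j S' (junction_vertex y) v"
      by blast
    show ?case
    proof (cases "j = k")
      case True then show ?thesis using h k copy_conn_trans by blast
    next
      case False
      then obtain z where z: "v = junction_vertex z"
        using copy_conn_switch[OF h(4) k(1) _ h(5) k(2)] by blast
      have "glued_conn S' (junction_vertex y) (junction_vertex z)"
        using h(4,5) z unfolding glued_conn_def by blast
      then have "on_copies glue_edge S' y z" using glued_conn_junction_vertex by blast
      then have "(on_copies glue_edge S')\<^sup>*\<^sup>* x z"
        using h(3) by (rule rtranclp.rtrancl_into_rtrancl[rotated])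
      then show ?thesis using h(1,2) k z by blast
    qed
  qed
qed

lemma conn_sier_step_junction_vertex:
  "(junction_vertex x, junction_vertex y) \<in> conn (sier_step G) S' \<longleftrightarrow> on_copies glue_rep S' x = on_copies glue_rep S' y"
proof
  assume "on_copies glue_rep S' x = on_copies glue_rep S' y"
  then have "(on_copies glue_edge S')\<^sup>*\<^sup>* x y" using glue_connected_iff by blast
  then have "(glued_conn S')\<^sup>*\<^sup>* (junction_vertex x) (junction_vertex y)"
    by (rule rtranclp_map[rotated]) (use glued_conn_junction_vertex in blast)
  then show "(junction_vertex x, junction_vertex y) \<in> conn (sier_step G) S'"
    unfolding conn_sier_step using junction_vertex_in by blast
next
  assume "(junction_vertex x, junction_vertex y) \<in> conn (sier_step G) S'"
  then have "(glued_conn S')\<^sup>*\<^sup>* (junction_vertex x) (junction_vertex y)"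
    unfolding conn_sier_step by blast
  from glued_path[OF this junction_vertex_in] have "(on_copies glue_edge S')\<^sup>*\<^sup>* x y"
  proof
    assume "\<exists>i<3. copy_conn i S' (junction_vertex x) (junction_vertex y)"
    then have "on_copies glue_edge S' x y"
      using glued_conn_junction_vertex unfolding glued_conn_def by blast
    then show ?thesis by blast
  next
    assume "\<exists>x' y'. (\<exists>i<3. copy_conn i S' (junction_vertex x) (junction_vertex x'))
      \<and> (on_copies glue_edge S')\<^sup>*\<^sup>* x' y' \<and> (\<exists>j<3. copy_conn j S' (junction_vertex y') (junction_vertex y))"
    then obtain x' y' where h: "on_copies glue_edge S' x x'" "(on_copies glue_edge S')\<^sup>*\<^sup>* x' y'"
      "on_copies glue_edge S' y' y"
      using glued_conn_junction_vertex unfolding glued_conn_def by blast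
    show ?thesis using h by (meson converse_rtranclp_into_rtranclp rtranclp.rtrancl_into_rtrancl)
  qed
  then show "on_copies glue_rep S' x = on_copies glue_rep S' y" using glue_connected_iff by blast
qed

lemma copy_reaches_outmost:
  assumes "i < 3" "a \<in> verts G" "i' < 3" "copy_conn i' S' (copy_map i a) (junction_vertex x)"
  shows "\<exists>k<3. (a, outmost_vertex k) \<in> conn G (copy_edges i S')"
proof -
  obtain a' b' where h: "copy_map i a = copy_map i' a'" "junction_vertex x = copy_map i' b'" "(a',b') \<in> conn G (copy_edges i' S')"
    using assms(4) unfolding copy_conn_def by blast
  show ?thesis
  proof (cases "i = i'")
    case True
    then have "a = a'" using h(1) inj_copy_map[of i] by (simp add: inj_eq)
    moreover obtain k where "k<3" "b' = outmost_vertex k"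
      using copy_map_eq_junction_vertex[OF assms(3) h(2)[symmetric]] by blast
    ultimately show ?thesis using h(3) True by blast
  next
    case False
    obtain z where "copy_map i a = junction_vertex z"
      using copy_map_meet[OF assms(1,3) False h(1)] by blast
    then obtain k where "k<3" "a = outmost_vertex k"
      using copy_map_eq_junction_vertex[OF assms(1)] by blast
    then show ?thesis using conn_refl[OF assms(2)] by blast
  qed
qed

lemma outmost_sier_step: "outmost (sier_step G) = junction_vertex ` {Top, Lft, Rgt}"
  by (simp add: outmost_def top_sier_step lft_sier_step rgt_sier_step)

lemma ex_outmost:
  "(\<exists>w\<in>outmost G. P w) \<longleftrightarrow> (\<exists>k<3. P (outmost_vertex k))"
  unfolding outmost_def outmost_vertex_def ex_less_3 by auto

lemma copy_edges_subset: "copy_edges i S' \<subseteq> edge_ids G"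
  by (auto simp: copy_edges_def edge_ids_def)

lemma rooted_copies_if_rooted_sier_step:
  assumes "rooted (sier_step G) S'"
  shows "\<forall>i<3. rooted G (copy_edges i S')" and "on_copies glue_rooted S'"
proof -
  have meet: "\<exists>w\<in>{Top, Lft, Rgt}. (u, junction_vertex w) \<in> conn (sier_step G) S'"
    if "u \<in> verts (sier_step G)" for u
    using assms that unfolding rooted_iff_reaches_outmost outmost_sier_step by blast
  show "on_copies glue_rooted S'"
    unfolding glue_rooted_def
  proof
    fix x
    obtain w where "w \<in> {Top, Lft, Rgt}" "(junction_vertex x, junction_vertex w) \<in> conn (sier_step G) S'"
      using meet[OF junction_vertex_in] by blast
    then show "on_copies glue_rep S' x \<in> {on_copies glue_rep S' Top, on_copies glue_rep S' Lft, on_copies glue_rep S' Rgt}"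
      using conn_sier_step_junction_vertex by blast
  qed
  show "\<forall>i<3. rooted G (copy_edges i S')"
  proof (intro allI impI)
    fix i :: nat assume i: "i < 3"
    have "\<exists>k<3. (a, outmost_vertex k) \<in> conn G (copy_edges i S')" if a: "a \<in> verts G" for a
    proof -
      have u: "copy_map i a \<in> verts (sier_step G)"
        using a i unfolding verts_sier_step_iff by blast
      obtain w where "(copy_map i a, junction_vertex w) \<in> conn (sier_step G) S'"
        using meet[OF u] by blast
      then have "(glued_conn S')\<^sup>*\<^sup>* (copy_map i a) (junction_vertex w)"
        unfolding conn_sier_step by blast
      from glued_path[OF this u] obtain i' x where "i' < 3" "copy_conn i' S' (copy_map i a) (junction_vertex x)"
        by blast
      from copy_reaches_outmost[OF i a this] show ?thesis .
    qed
    then show "rooted G (copy_edges i S')"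
      unfolding rooted_iff_reaches_outmost ex_outmost using copy_edges_subset by blast
  qed
qed

lemma rooted_sier_step_if_copies:
  assumes "S' \<subseteq> edge_ids (sier_step G)" "\<forall>i<3. rooted G (copy_edges i S')" "on_copies glue_rooted S'"
  shows "rooted (sier_step G) S'"
  unfolding rooted_iff_reaches_outmost
proof (intro conjI assms(1) ballI)
  fix u assume "u \<in> verts (sier_step G)"
  then obtain i a where ia: "i < 3" "a \<in> verts G" "u = copy_map i a"
    unfolding verts_sier_step_iff by blast
  then obtain k where k: "k < 3" "(a, outmost_vertex k) \<in> conn G (copy_edges i S')"
    using assms(2) ia(1,2) unfolding rooted_iff_reaches_outmost ex_outmost by blast
  then have "copy_conn i S' u (junction_vertex (corner i k))"
    using ia copy_map_outmost_vertex unfolding copy_conn_def by metis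
  then have u: "(u, junction_vertex (corner i k)) \<in> conn (sier_step G) S'"
    unfolding conn_sier_step glued_conn_def using ia(1) \<open>u \<in> verts (sier_step G)\<close> junction_vertex_in
    by blast
  obtain w where "w \<in> {Top, Lft, Rgt}" "on_copies glue_rep S' (corner i k) = on_copies glue_rep S' w"
    using assms(3) unfolding glue_rooted_def by (cases "corner i k") auto
  then show "\<exists>w\<in>outmost (sier_step G). (u, w) \<in> conn (sier_step G) S'"
    unfolding outmost_sier_step using u conn_sier_step_junction_vertex conn_trans by blast
qed

lemma rooted_sier_step_iff:
  "S' \<subseteq> edge_ids (sier_step G) \<Longrightarrow>
    rooted (sier_step G) S' \<longleftrightarrow> (\<forall>i<3. rooted G (copy_edges i S')) \<and> on_copies glue_rooted S'"
  using rooted_copies_if_rooted_sier_step rooted_sier_step_if_copies by blast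

lemma tstate_of_sier_step: "tstate_of (sier_step G) S' = on_copies glue_tstate S'"
  unfolding tstate_of_def glue_tstate_def top_sier_step lft_sier_step rgt_sier_step conn_sier_step_junction_vertex ..

lemma finite_verts_sier_step: "finite (verts (sier_step G))"
  using finite_verts by (simp add: verts_sier_step)

lemma ncomp_sier_step:
  assumes "rooted (sier_step G) S'"
  shows "ncomp (sier_step G) S' = on_copies glue_blocks S'"
proof -
  let ?R' = "conn (sier_step G) S'"
  let ?P = "{Top,Mid_tl,Mid_tr,Lft,Mid_lr,Rgt}"
  have sub: "junction_vertex ` ?P \<subseteq> verts (sier_step G)" using junction_vertex_in by blast
  have cov: "\<forall>X\<in>verts (sier_step G) // ?R'. X \<inter> junction_vertex ` ?P \<noteq> {}"
    using assms unfolding rooted_def outmost_sier_step by blast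
  have "ncomp (sier_step G) S' = card ((\<lambda>q. ?R'``{q}) ` junction_vertex ` ?P)"
    unfolding ncomp_def using quotient_eq_classes[OF conn_equiv sub cov] by simp
  also have "\<dots> = card ((\<lambda>x. ?R'``{junction_vertex x}) ` ?P)"
    by (simp add: image_image)
  also have "\<dots> = card (on_copies glue_rep S' ` ?P)"
  proof (rule card_image_eq_kernel)
    fix a b assume "a \<in> ?P" "b \<in> ?P"
    show "(?R'``{junction_vertex a} = ?R'``{junction_vertex b}) = (on_copies glue_rep S' a = on_copies glue_rep S' b)"
      using eq_equiv_class_iff[OF conn_equiv junction_vertex_in junction_vertex_in] conn_sier_step_junction_vertex
      by blast
  qed
  finally show ?thesis unfolding glue_blocks_def .
qed

lemma card_copy_map: "card (copy_map i ` verts G) = card (verts G)"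
  using inj_copy_map[of i] by (simp add: card_image inj_on_subset)

lemma copies_meet:
  assumes "i < 3" "j < 3" "i \<noteq> j" "u \<in> copy_map i ` verts G" "u \<in> copy_map j ` verts G"
  shows "\<exists>z. u = junction_vertex z \<and> (\<exists>k<3. z = corner i k) \<and> (\<exists>k<3. z = corner j k)"
proof -
  obtain a b where ab: "u = copy_map i a" "u = copy_map j b" using assms(4,5) by blast
  obtain z where z: "u = junction_vertex z" using copy_map_meet[OF assms(1,2,3)] ab by metis
  show ?thesis
    using copy_map_eq_junction_vertex[OF assms(1)] copy_map_eq_junction_vertex[OF assms(2)] ab z
    by metis
qed

lemma inj_junction_vertex: "inj junction_vertex"
  unfolding inj_def junction_vertex_def using top_ne_lft top_ne_rgt lft_ne_rgt
  by (auto split: junction.splits; presburger)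

lemma copies_01_inter:
  "copy_map 0 ` verts G \<inter> copy_map 1 ` verts G = {junction_vertex Mid_tl}"
proof
  show "copy_map 0 ` verts G \<inter> copy_map 1 ` verts G \<subseteq> {junction_vertex Mid_tl}"
  proof
    fix u assume "u \<in> copy_map 0 ` verts G \<inter> copy_map 1 ` verts G"
    then obtain z where "u = junction_vertex z" "\<exists>k<3. z = corner 0 k" "\<exists>k<3. z = corner 1 k"
      using copies_meet[of 0 1 u] by auto
    then show "u \<in> {junction_vertex Mid_tl}" using corner_in by fastforce
  qed
  have e: "junction_vertex Mid_tl = copy_map 0 (outmost_vertex 1)" "junction_vertex Mid_tl = copy_map 1 (outmost_vertex 0)"
    using copy_map_outmost_vertex[of 0 1] copy_map_outmost_vertex[of 1 0] by (auto simp: corner_def)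
  have "junction_vertex Mid_tl \<in> copy_map 0 ` verts G"
    using outmost_vertex_in[of 1] e(1) by (metis image_eqI)
  moreover have "junction_vertex Mid_tl \<in> copy_map 1 ` verts G"
    using outmost_vertex_in[of 0] e(2) by (metis image_eqI)
  ultimately show "{junction_vertex Mid_tl} \<subseteq> copy_map 0 ` verts G \<inter> copy_map 1 ` verts G"
    by simp
qed

lemma copies_2_inter:
  "(copy_map 0 ` verts G \<union> copy_map 1 ` verts G) \<inter> copy_map 2 ` verts G = {junction_vertex Mid_tr, junction_vertex Mid_lr}"
proof
  show "(copy_map 0 ` verts G \<union> copy_map 1 ` verts G) \<inter> copy_map 2 ` verts G \<subseteq> {junction_vertex Mid_tr, junction_vertex Mid_lr}"
  proof
    fix u assume u: "u \<in> (copy_map 0 ` verts G \<union> copy_map 1 ` verts G) \<inter> copy_map 2 ` verts G"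
    show "u \<in> {junction_vertex Mid_tr, junction_vertex Mid_lr}"
    proof (cases "u \<in> copy_map 0 ` verts G")
      case True
      then obtain z where "u = junction_vertex z" "\<exists>k<3. z = corner 0 k" "\<exists>k<3. z = corner 2 k"
        using u copies_meet[of 0 2 u] by auto
      then show ?thesis using corner_in by fastforce
    next
      case False
      then obtain z where "u = junction_vertex z" "\<exists>k<3. z = corner 1 k" "\<exists>k<3. z = corner 2 k"
        using u copies_meet[of 1 2 u] by auto
      then show ?thesis using corner_in by fastforce
    qed
  qed
  have e: "junction_vertex Mid_tr = copy_map 0 (outmost_vertex 2)" "junction_vertex Mid_tr = copy_map 2 (outmost_vertex 0)"
    "junction_vertex Mid_lr = copy_map 1 (outmost_vertex 2)" "junction_vertex Mid_lr = copy_map 2 (outmost_vertex 1)"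
    using copy_map_outmost_vertex[of 0 2] copy_map_outmost_vertex[of 2 0] copy_map_outmost_vertex[of 1 2]
      copy_map_outmost_vertex[of 2 1]
    by (auto simp: corner_def)
  have "junction_vertex Mid_tr \<in> copy_map 0 ` verts G"
    using outmost_vertex_in[of 2] e(1) by (metis image_eqI)
  moreover have "junction_vertex Mid_tr \<in> copy_map 2 ` verts G"
    using outmost_vertex_in[of 0] e(2) by (metis image_eqI)
  moreover have "junction_vertex Mid_lr \<in> copy_map 1 ` verts G"
    using outmost_vertex_in[of 2] e(3) by (metis image_eqI)
  moreover have "junction_vertex Mid_lr \<in> copy_map 2 ` verts G"
    using outmost_vertex_in[of 1] e(4) by (metis image_eqI)
  ultimately show "{junction_vertex Mid_tr, junction_vertex Mid_lr} \<subseteq> (copy_map 0 ` verts G \<union> copy_map 1 ` verts G) \<inter> copy_map 2 ` verts G"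
    by simp
qed

lemma card_verts_sier_step: "card (verts (sier_step G)) = 3 * card (verts G) - 3"
proof -
  let ?v = "card (verts G)"
  have f: "finite (copy_map i ` verts G)" for i using finite_verts by simp
  have 1: "card (copy_map 0 ` verts G \<union> copy_map 1 ` verts G) = 2 * ?v - 1"
    using card_Un_Int[OF f f, of 0 1] card_copy_map copies_01_inter card_verts_ge_3 by simp
  have d: "junction_vertex Mid_tr \<noteq> junction_vertex Mid_lr"
    using inj_junction_vertex by (simp add: inj_eq)
  have 2: "card (copy_map 0 ` verts G \<union> copy_map 1 ` verts G \<union> copy_map 2 ` verts G) = (2 * ?v - 1) + ?v - 2"
    using card_Un_Int[of "copy_map 0 ` verts G \<union> copy_map 1 ` verts G" "copy_map 2 ` verts G"] f 1 card_copy_map copies_2_inter d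
    by simp
  show ?thesis unfolding verts_sier_step 2 using card_verts_ge_3 by simp
qed

lemma three_terminal_sier_step: "three_terminal (sier_step G)"
proof
  show "finite (verts (sier_step G))" by (rule finite_verts_sier_step)
  show "top (sier_step G) \<in> verts (sier_step G)" "lft (sier_step G) \<in> verts (sier_step G)"
    "rgt (sier_step G) \<in> verts (sier_step G)"
    unfolding top_sier_step lft_sier_step rgt_sier_step by (rule junction_vertex_in)+
  show "top (sier_step G) \<noteq> lft (sier_step G)" "top (sier_step G) \<noteq> rgt (sier_step G)"
    "lft (sier_step G) \<noteq> rgt (sier_step G)"
    unfolding top_sier_step lft_sier_step rgt_sier_step using inj_junction_vertex
    by (simp_all add: inj_eq)
  fix k assume "k < length (edges (sier_step G))"
  then obtain i j where ij: "i < 3" "j < length (edges G)" "k = i * length (edges G) + j"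
    unfolding length_edges_sier_step less_mult_3_iff by blast
  then show "fst (edges (sier_step G) ! k) \<in> verts (sier_step G) \<and> snd (edges (sier_step G) ! k) \<in> verts (sier_step G)"
    using nth_edges_sier_step[OF ij(1,2)] edge_in_verts[OF ij(2)] unfolding verts_sier_step_iff
    by (auto simp: map_prod_def split: prod.splits)
qed

definition merge_edges :: "nat set \<Rightarrow> nat set \<Rightarrow> nat set \<Rightarrow> nat set" where
  "merge_edges A B C = A \<union> (\<lambda>j. length (edges G) + j) ` B \<union> (\<lambda>j. 2 * length (edges G) + j) ` C"

lemma edge_ids_sier_step: "edge_ids (sier_step G) = {0..<3 * length (edges G)}"
  by (simp add: edge_ids_def length_edges_sier_step)

lemma copy_edges_merge_edges:
  assumes "A \<subseteq> edge_ids G" "B \<subseteq> edge_ids G" "C \<subseteq> edge_ids G"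
  shows "copy_edges 0 (merge_edges A B C) = A" "copy_edges 1 (merge_edges A B C) = B" "copy_edges 2 (merge_edges A B C) = C"
  using assms by (auto simp: copy_edges_def merge_edges_def edge_ids_def)

lemma merge_copy_edges:
  assumes "S' \<subseteq> edge_ids (sier_step G)"
  shows "merge_edges (copy_edges 0 S') (copy_edges 1 S') (copy_edges 2 S') = S'"
proof -
  let ?m = "length (edges G)"
  have "x \<in> merge_edges (copy_edges 0 S') (copy_edges 1 S') (copy_edges 2 S')" if "x \<in> S'" for x
  proof -
    have x: "x < 3 * ?m" using that assms edge_ids_sier_step by auto
    consider "x < ?m" | "?m \<le> x" "x < 2 * ?m" | "2 * ?m \<le> x" by linarith
    then show ?thesis
    proof cases
      case 1 then show ?thesis using that by (simp add: merge_edges_def copy_edges_def)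
    next
      case 2
      then have "x - ?m \<in> copy_edges 1 S'" using that by (simp add: copy_edges_def)
      then show ?thesis
        using 2 unfolding merge_edges_def by (auto intro!: image_eqI[of _ _ "x - ?m"])
    next
      case 3
      then have "x - 2 * ?m \<in> copy_edges 2 S'" using that x by (simp add: copy_edges_def)
      then show ?thesis
        using 3 unfolding merge_edges_def by (auto intro!: image_eqI[of _ _ "x - 2 * ?m"])
    qed
  qed
  moreover have "merge_edges (copy_edges 0 S') (copy_edges 1 S') (copy_edges 2 S') \<subseteq> S'"
    by (auto simp: merge_edges_def copy_edges_def)
  ultimately show ?thesis by blast
qed

lemma merge_edges_subset:
  "A \<subseteq> edge_ids G \<Longrightarrow> B \<subseteq> edge_ids G \<Longrightarrow> C \<subseteq> edge_ids G \<Longrightarrow> merge_edges A B C \<subseteq> edge_ids (sier_step G)"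
  by (auto simp: merge_edges_def edge_ids_def length_edges_sier_step)

lemma bij_merge_edges:
  "bij_betw (\<lambda>(A, B, C). merge_edges A B C) (Pow (edge_ids G) \<times> Pow (edge_ids G) \<times> Pow (edge_ids G))
     (Pow (edge_ids (sier_step G)))"
proof (rule bij_betw_byWitness[where f' = "\<lambda>S'. (copy_edges 0 S', copy_edges 1 S', copy_edges 2 S')"])
  show "\<forall>a\<in>Pow (edge_ids G) \<times> Pow (edge_ids G) \<times> Pow (edge_ids G).
    (\<lambda>S'. (copy_edges 0 S', copy_edges 1 S', copy_edges 2 S')) ((\<lambda>(A, B, C). merge_edges A B C) a) = a"
    using copy_edges_merge_edges by auto
  show "\<forall>S'\<in>Pow (edge_ids (sier_step G)).
    (\<lambda>(A, B, C). merge_edges A B C) ((\<lambda>S'. (copy_edges 0 S', copy_edges 1 S', copy_edges 2 S')) S') = S'"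
    using merge_copy_edges by simp
  show "(\<lambda>(A, B, C). merge_edges A B C) ` (Pow (edge_ids G) \<times> Pow (edge_ids G) \<times> Pow (edge_ids G))
    \<subseteq> Pow (edge_ids (sier_step G))"
    using merge_edges_subset by auto
  show "(\<lambda>S'. (copy_edges 0 S', copy_edges 1 S', copy_edges 2 S')) ` Pow (edge_ids (sier_step G))
    \<subseteq> Pow (edge_ids G) \<times> Pow (edge_ids G) \<times> Pow (edge_ids G)"
    using copy_edges_subset by auto
qed

lemma card_merge_edges:
  assumes "A \<subseteq> edge_ids G" "B \<subseteq> edge_ids G" "C \<subseteq> edge_ids G"
  shows "card (merge_edges A B C) = card A + card B + card C"
proof -
  let ?m = "length (edges G)"
  have fA: "finite A" "finite B" "finite C"
    using assms by (auto simp: edge_ids_def intro: finite_subset)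
  have cB: "card ((\<lambda>j. ?m + j) ` B) = card B" by (simp add: card_image)
  have cC: "card ((\<lambda>j. 2 * ?m + j) ` C) = card C" by (simp add: card_image)
  have d1: "A \<inter> (\<lambda>j. ?m + j) ` B = {}" using assms by (auto simp: edge_ids_def)
  have d2: "(A \<union> (\<lambda>j. ?m + j) ` B) \<inter> (\<lambda>j. 2 * ?m + j) ` C = {}"
    using assms by (auto simp: edge_ids_def)
  show ?thesis unfolding merge_edges_def
    using card_Un_disjoint[OF _ _ d2] card_Un_disjoint[OF _ _ d1] fA cB cC by simp
qed

lemma rk_rooted: "rooted G S \<Longrightarrow> rk G S = card (verts G) - nblocks (tstate_of G S)"
  by (simp add: rk_def ncomp_rooted)

lemma nul_merge_edges:
  assumes rank: "rooted_rank_le_card G" and sub: "A \<subseteq> edge_ids G" "B \<subseteq> edge_ids G" "C \<subseteq> edge_ids G"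
    and g: "rooted G A" "rooted G B" "rooted G C" "glue_rooted (tstate_of G A) (tstate_of G B) (tstate_of G C)"
  shows "nul (sier_step G) (merge_edges A B C)
      = nul G A + nul G B + nul G C + glue_nullity (tstate_of G A) (tstate_of G B) (tstate_of G C)"
    and "rk (sier_step G) (merge_edges A B C) \<le> card (merge_edges A B C)"
proof -
  let ?S = "merge_edges A B C"
  let ?v = "card (verts G)"
  let ?a = "nblocks (tstate_of G A)" and ?b = "nblocks (tstate_of G B)" and ?c = "nblocks (tstate_of G C)"
  let ?blocks = "glue_blocks (tstate_of G A) (tstate_of G B) (tstate_of G C)"
  have "rooted (sier_step G) ?S"
    using rooted_sier_step_iff[OF merge_edges_subset[OF sub]] copy_edges_merge_edges[OF sub] g
    by (simp add: all_less_3)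
  then have "ncomp (sier_step G) ?S = ?blocks"
    using ncomp_sier_step copy_edges_merge_edges[OF sub] by simp
  then have rk: "rk (sier_step G) ?S = (3 * ?v - 3) - ?blocks"
    unfolding rk_def card_verts_sier_step by simp
  have card: "card ?S = card A + card B + card C"
    by (rule card_merge_edges[OF sub])
  have bounds: "3 \<le> ?v" "?a \<le> 3" "?b \<le> 3" "?c \<le> 3" "?blocks \<le> 6"
    using card_verts_ge_3 nblocks_le_3 glue_blocks_le_6 by auto
  have rank_copies: "?v - ?a \<le> card A" "?v - ?b \<le> card B" "?v - ?c \<le> card C"
    using rank g unfolding rooted_rank_le_card_def by (auto simp: rk_rooted)
  have blocks: "?a + ?b + ?c \<le> 3 + ?blocks"
    using glue_blocks_ge[OF g(4)] .
  show "nul (sier_step G) ?S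
      = nul G A + nul G B + nul G C + glue_nullity (tstate_of G A) (tstate_of G B) (tstate_of G C)"
    unfolding nul_def rk card glue_nullity_def using g(1-3) bounds rank_copies blocks by (simp add: rk_rooted)
  show "rk (sier_step G) ?S \<le> card ?S"
    unfolding rk card using bounds rank_copies blocks by arith
qed

lemma summand_merge_edges:
  assumes "rooted_rank_le_card G" and sub: "A \<subseteq> edge_ids G" "B \<subseteq> edge_ids G" "C \<subseteq> edge_ids G"
  shows "(if rooted (sier_step G) (merge_edges A B C) \<and> tstate_of (sier_step G) (merge_edges A B C) = s
          then (y - 1) ^ nul (sier_step G) (merge_edges A B C) else 0)
    = (if rooted G A \<and> rooted G B \<and> rooted G C
       then glue_factor y s (tstate_of G A) (tstate_of G B) (tstate_of G C)
         * ((y - 1) ^ nul G A * (y - 1) ^ nul G B * (y - 1) ^ nul G C)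
       else 0)"
proof -
  let ?g = "glue_rooted (tstate_of G A) (tstate_of G B) (tstate_of G C)"
  have rooted: "rooted (sier_step G) (merge_edges A B C) \<longleftrightarrow> rooted G A \<and> rooted G B \<and> rooted G C \<and> ?g"
    using rooted_sier_step_iff[OF merge_edges_subset[OF sub]] copy_edges_merge_edges[OF sub]
    by (simp add: all_less_3)
  have tstate: "tstate_of (sier_step G) (merge_edges A B C) = glue_tstate (tstate_of G A) (tstate_of G B) (tstate_of G C)"
    using tstate_of_sier_step copy_edges_merge_edges[OF sub] by simp
  show ?thesis
  proof (cases "rooted G A \<and> rooted G B \<and> rooted G C \<and> ?g")
    case True
    then have "nul (sier_step G) (merge_edges A B C)
        = nul G A + nul G B + nul G C + glue_nullity (tstate_of G A) (tstate_of G B) (tstate_of G C)"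
      using nul_merge_edges(1)[OF assms] by blast
    then show ?thesis using True rooted tstate by (simp add: glue_factor_def power_add mult_ac)
  qed (use rooted in \<open>auto simp: glue_factor_def\<close>)
qed

lemma rooted_weight_sier_step:
  assumes "rooted_rank_le_card G"
  shows "rooted_weight (sier_step G) y s =
    (\<Sum>s1\<in>UNIV. \<Sum>s2\<in>UNIV. \<Sum>s3\<in>UNIV. glue_factor y s s1 s2 s3
       * rooted_weight G y s1 * rooted_weight G y s2 * rooted_weight G y s3)"
proof -
  let ?P = "Pow (edge_ids G)"
  let ?F = "\<lambda>S'. if rooted (sier_step G) S' \<and> tstate_of (sier_step G) S' = s
     then (y - 1) ^ nul (sier_step G) S' else 0"
  have "rooted_weight (sier_step G) y s = (\<Sum>S'\<in>Pow (edge_ids (sier_step G)). ?F S')"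
    by (rule rooted_weight_eq_sum)
  also have "\<dots> = (\<Sum>(A,B,C)\<in>?P \<times> ?P \<times> ?P. ?F (merge_edges A B C))"
    unfolding sum.reindex_bij_betw[OF bij_merge_edges, of ?F, symmetric]
    by (intro sum.cong refl) (auto split: prod.splits)
  also have "\<dots> = (\<Sum>A\<in>?P. \<Sum>B\<in>?P. \<Sum>C\<in>?P. ?F (merge_edges A B C))"
    by (simp add: sum.cartesian_product)
  also have "\<dots> = (\<Sum>A\<in>?P. \<Sum>B\<in>?P. \<Sum>C\<in>?P. if rooted G A \<and> rooted G B \<and> rooted G C
      then glue_factor y s (tstate_of G A) (tstate_of G B) (tstate_of G C)
        * ((y - 1) ^ nul G A * (y - 1) ^ nul G B * (y - 1) ^ nul G C)
      else 0)"
    by (intro sum.cong refl) (simp add: summand_merge_edges[OF assms])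
  also have "\<dots> = (\<Sum>s1\<in>UNIV. \<Sum>s2\<in>UNIV. \<Sum>s3\<in>UNIV. glue_factor y s s1 s2 s3
       * rooted_weight G y s1 * rooted_weight G y s2 * rooted_weight G y s3)"
    by (rule sum_by_class3[OF finite_Pow_iff[THEN iffD2, OF finite_edge_ids] finite_UNIV_tstate
          rooted_weight_by_class])
  finally show ?thesis .
qed

lemma rooted_rank_le_card_sier_step:
  assumes "rooted_rank_le_card G"
  shows "rooted_rank_le_card (sier_step G)"
  unfolding rooted_rank_le_card_def
proof (intro allI impI)
  fix S' assume S': "rooted (sier_step G) S'"
  then have sub: "S' \<subseteq> edge_ids (sier_step G)" by (simp add: rooted_def)
  have copies: "rooted G (copy_edges 0 S')" "rooted G (copy_edges 1 S')" "rooted G (copy_edges 2 S')"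
    "on_copies glue_rooted S'"
    using rooted_sier_step_iff[OF sub] S' by (simp_all add: all_less_3)
  show "rk (sier_step G) S' \<le> card S'"
    using nul_merge_edges(2)[OF assms copy_edges_subset copy_edges_subset copy_edges_subset copies]
    unfolding merge_copy_edges[OF sub] .
qed

lemma connected_sier_step:
  assumes "rooted G (edge_ids G)" "tstate_of G (edge_ids G) = Joined"
  shows "rooted (sier_step G) (edge_ids (sier_step G))"
    and "tstate_of (sier_step G) (edge_ids (sier_step G)) = Joined"
proof -
  have copies: "copy_edges i (edge_ids (sier_step G)) = edge_ids G" if "i < 3" for i
    using less_3_cases[OF that]
    by (auto simp: copy_edges_def edge_ids_sier_step edge_ids_def length_edges_sier_step)
  have "glue_rooted Joined Joined Joined" "glue_tstate Joined Joined Joined = Joined"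
    by (simp_all add: glue_rooted_def glue_tstate_def glue_rep_def tstate_mk_def)
  then show "rooted (sier_step G) (edge_ids (sier_step G))"
    and "tstate_of (sier_step G) (edge_ids (sier_step G)) = Joined"
    using rooted_sier_step_iff[of "edge_ids (sier_step G)"] tstate_of_sier_step[of "edge_ids (sier_step G)"]
      copies assms
    by (simp_all add: all_less_3)
qed

end

section \<open>Spanning subgraphs at x = 1\<close>

context three_terminal begin

lemma tstate_of_eq_iff:
  "tstate_of G S = Joined \<longleftrightarrow> (top G, lft G) \<in> conn G S \<and> (top G, rgt G) \<in> conn G S"
  "tstate_of G S = Top_apart \<longleftrightarrow> (lft G, rgt G) \<in> conn G S \<and> (top G, lft G) \<notin> conn G S"
  "tstate_of G S = Apart \<longleftrightarrow>
     (top G, lft G) \<notin> conn G S \<and> (top G, rgt G) \<notin> conn G S \<and> (lft G, rgt G) \<notin> conn G S"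
  using joins_tstate_of[of S] by (cases "tstate_of G S"; simp)+

lemma ncomp_eq_1_iff:
  assumes "S \<subseteq> edge_ids G"
  shows "ncomp G S = 1 \<longleftrightarrow> rooted G S \<and> tstate_of G S = Joined"
proof
  assume "ncomp G S = 1"
  moreover have "nblocks s = 1 \<longleftrightarrow> s = Joined" for s by (cases s) auto
  ultimately show "rooted G S \<and> tstate_of G S = Joined"
    using nblocks_le_ncomp[of S] rooted_iff_ncomp[OF assms] nblocks_pos[of "tstate_of G S"]
    by (metis le_antisym)
qed (simp add: ncomp_rooted)

lemma reliability_eq:
  assumes "rooted_rank_le_card G" and "p < 1"
  shows "reliability G p = p ^ (card (verts G) - 1) * (1 - p) ^ (card (edge_ids G) - (card (verts G) - 1))
     * rooted_weight G (1 / (1 - p)) Joined"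
proof -
  let ?r = "card (verts G) - 1" and ?m = "card (edge_ids G)"
  let ?J = "{S. rooted G S \<and> tstate_of G S = Joined}"
  have y: "1 / (1 - p) - 1 = p / (1 - p)" using assms(2) by (simp add: field_simps)
  have summand:
    "p ^ card S * (1 - p) ^ (?m - card S) = p ^ ?r * (1 - p) ^ (?m - ?r) * (1 / (1 - p) - 1) ^ nul G S"
    if "S \<in> ?J" for S
  proof -
    from that have S: "rooted G S" "tstate_of G S = Joined" by auto
    have rk: "rk G S = ?r" using rk_rooted[OF S(1)] S(2) by simp
    have "?r \<le> card S" using assms(1) S(1) rk unfolding rooted_rank_le_card_def by metis
    moreover have "card S \<le> ?m"
      using S(1) card_mono[OF finite_edge_ids] unfolding rooted_def by blast
    ultimately have "p ^ card S * (1 - p) ^ (?m - card S)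
        = p ^ ?r * (1 - p) ^ (?m - ?r) * (p / (1 - p)) ^ (card S - ?r)"
      using assms(2) by (intro power_split_complement) auto
    then show ?thesis unfolding y nul_def rk .
  qed
  have "{S. S \<subseteq> edge_ids G \<and> ncomp G S = 1} = ?J"
    using ncomp_eq_1_iff by (auto simp: rooted_def)
  then have "reliability G p = (\<Sum>S\<in>?J. p ^ card S * (1 - p) ^ (?m - card S))"
    unfolding reliability_def by simp
  also have "\<dots> = (\<Sum>S\<in>?J. p ^ ?r * (1 - p) ^ (?m - ?r) * (1 / (1 - p) - 1) ^ nul G S)"
    using summand by (rule sum.cong[OF refl])
  finally show ?thesis
    unfolding rooted_weight_def by (simp add: sum_distrib_left)
qed

context
  assumes connected: "rooted G (edge_ids G)" "tstate_of G (edge_ids G) = Joined"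
begin

lemma rk_edge_ids_diff: "rk G (edge_ids G) - rk G S = ncomp G S - 1"
proof -
  have "ncomp G (edge_ids G) = 1"
    using ncomp_rooted[OF connected(1)] connected(2) by simp
  then show ?thesis
    unfolding rk_def using ncomp_le_card[of S] ncomp_pos[of S] by simp
qed

lemma sum_at_1:
  "(\<Sum>S | S \<subseteq> edge_ids G \<and> tstate_of G S = s.
      (1 - 1 :: real) ^ (rk G (edge_ids G) - rk G S - (nblocks s - 1)) * (y - 1) ^ nul G S)
   = rooted_weight G y s"
proof -
  have "(1 - 1 :: real) ^ (rk G (edge_ids G) - rk G S - (nblocks s - 1)) * (y - 1) ^ nul G S
      = (if rooted G S then (y - 1) ^ nul G S else 0)"
    if "S \<subseteq> edge_ids G" "tstate_of G S = s" for S
    using that rooted_iff_ncomp[OF that(1)] nblocks_le_ncomp[of S] nblocks_pos[of s]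
    unfolding rk_edge_ids_diff by auto
  then have "(\<Sum>S | S \<subseteq> edge_ids G \<and> tstate_of G S = s.
      (1 - 1 :: real) ^ (rk G (edge_ids G) - rk G S - (nblocks s - 1)) * (y - 1) ^ nul G S)
    = (\<Sum>S \<in> {S. S \<subseteq> edge_ids G \<and> tstate_of G S = s}. if rooted G S then (y - 1) ^ nul G S else 0)"
    by (intro sum.cong) auto
  also have "\<dots> = (\<Sum>S \<in> {S \<in> {S. S \<subseteq> edge_ids G \<and> tstate_of G S = s}. rooted G S}. (y - 1) ^ nul G S)"
    by (rule sum.inter_filter[symmetric])
      (use finite_edge_ids in \<open>auto intro: rev_finite_subset[of "Pow (edge_ids G)"]\<close>)
  also have "{S \<in> {S. S \<subseteq> edge_ids G \<and> tstate_of G S = s}. rooted G S}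
      = {S. rooted G S \<and> tstate_of G S = s}"
    by (auto simp: rooted_def)
  finally show ?thesis unfolding rooted_weight_def .
qed

lemma T2_at_1: "T2 G 1 y = rooted_weight G y Joined"
  using sum_at_1[of Joined y] unfolding T2_def tweight_def tstate_of_eq_iff by simp

lemma Npoly_at_1: "Npoly G 1 y = rooted_weight G y Top_apart"
  using sum_at_1[of Top_apart y] unfolding Npoly_def tstate_of_eq_iff by simp

lemma Mpoly_at_1: "Mpoly G 1 y = rooted_weight G y Apart"
  using sum_at_1[of Apart y] unfolding Mpoly_def tstate_of_eq_iff by simp

lemma tutte_at_1: "tutte G 1 y = T2 G 1 y"
proof -
  have "tweight G 1 y S = 0" if "S \<subseteq> edge_ids G" "tstate_of G S \<noteq> Joined" for S
  proof -
    have "nblocks (tstate_of G S) \<noteq> 1" using that(2) by (cases "tstate_of G S") auto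
    then have "rk G (edge_ids G) - rk G S \<noteq> 0"
      using nblocks_le_ncomp[of S] nblocks_pos[of "tstate_of G S"] unfolding rk_edge_ids_diff
      by linarith
    then show ?thesis by (simp add: tweight_def)
  qed
  then have "tutte G 1 y = (\<Sum>S | S \<subseteq> edge_ids G \<and> tstate_of G S = Joined. tweight G 1 y S)"
    unfolding tutte_def using finite_edge_ids
    by (intro sum.mono_neutral_right) auto
  then show ?thesis
    unfolding T2_def tstate_of_eq_iff by simp
qed

end

end

section \<open>The triangle\<close>

lemma triangle_simps: "verts triangle = {0,1,2}" "edges triangle = [(0,1),(1,2),(0,2)]"
  "top triangle = 0" "lft triangle = 1" "rgt triangle = 2" "edge_ids triangle = {0,1,2}"
  by (auto simp: triangle_def edge_ids_def)

lemma three_terminal_triangle: "three_terminal triangle"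
  by (unfold_locales) (auto simp: triangle_simps less_Suc_eq numeral_3_eq_3 nth_Cons')

lemma adj_triangle:
  "adj triangle S u v \<longleftrightarrow> (0 \<in> S \<and> (u,v) \<in> {(0,1),(1,0)}) \<or> (1 \<in> S \<and> (u,v) \<in> {(1,2),(2,1)})
     \<or> (2 \<in> S \<and> (u,v) \<in> {(0,2),(2,0)})"
proof -
  have l: "length (edges triangle) = 3" by (simp add: triangle_simps)
  show ?thesis unfolding adj_def l bex_less_3 by (auto simp: triangle_simps)
qed

lemma tstate_of_triangle:
  "tstate_of triangle S =
     tstate_mk (0 \<in> S \<or> (2 \<in> S \<and> 1 \<in> S)) (2 \<in> S \<or> (0 \<in> S \<and> 1 \<in> S)) (1 \<in> S \<or> (0 \<in> S \<and> 2 \<in> S))"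
proof -
  have "(0, 1) \<in> conn triangle S \<longleftrightarrow> 0 \<in> S \<or> (2 \<in> S \<and> 1 \<in> S)"
    by (rule conn_triangle_iff[where c = 2]) (auto simp: adj_triangle triangle_simps)
  moreover have "(0, 2) \<in> conn triangle S \<longleftrightarrow> 2 \<in> S \<or> (0 \<in> S \<and> 1 \<in> S)"
    by (rule conn_triangle_iff[where c = 1]) (auto simp: adj_triangle triangle_simps)
  moreover have "(1, 2) \<in> conn triangle S \<longleftrightarrow> 1 \<in> S \<or> (0 \<in> S \<and> 2 \<in> S)"
    by (rule conn_triangle_iff[where c = 0]) (auto simp: adj_triangle triangle_simps)
  ultimately show ?thesis
    unfolding tstate_of_def triangle_simps by simp
qed

lemma rooted_triangle: "S \<subseteq> edge_ids triangle \<Longrightarrow> rooted triangle S"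
  unfolding rooted_def
proof (intro conjI ballI, assumption)
  fix X assume X: "X \<in> verts triangle // conn triangle S"
  then have "X \<noteq> {}" using in_quotient_imp_non_empty[OF conn_equiv] by blast
  moreover have "X \<subseteq> verts triangle" using X by (auto elim!: quotientE simp: conn_def)
  moreover have "outmost triangle = verts triangle" by (simp add: outmost_def triangle_simps)
  ultimately show "X \<inter> outmost triangle \<noteq> {}" by blast
qed

lemma nul_triangle:
  "S \<subseteq> edge_ids triangle \<Longrightarrow> nul triangle S = card S - (3 - nblocks (tstate_of triangle S))"
  unfolding nul_def rk_def using three_terminal.ncomp_rooted[OF three_terminal_triangle rooted_triangle]
  by (simp add: triangle_simps)

lemma rk_triangle:
  "S \<subseteq> edge_ids triangle \<Longrightarrow> rk triangle S = 3 - nblocks (tstate_of triangle S)"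
  unfolding rk_def using three_terminal.ncomp_rooted[OF three_terminal_triangle rooted_triangle]
  by (simp add: triangle_simps)

lemma sum_Pow_insert:
  assumes "finite A" "a \<notin> A"
  shows "(\<Sum>S\<in>Pow (insert a A). f S) = (\<Sum>S\<in>Pow A. f S) + (\<Sum>S\<in>Pow A. f (insert a S))"
proof -
  have d: "Pow A \<inter> insert a ` Pow A = {}" using assms(2) by auto
  have i: "inj_on (insert a) (Pow A)" using assms(2) unfolding inj_on_def
    by (metis Pow_iff insert_ident subset_iff)
  show ?thesis unfolding Pow_insert
    using sum.union_disjoint[OF _ _ d, of f] sum.reindex[OF i, of f] assms(1) by simp
qed

lemma rooted_weight_triangle_eq:
  "rooted_weight triangle y s = (\<Sum>S\<in>Pow {0,1,2}.
     if tstate_of triangle S = s then (y - 1) ^ (card S - (3 - nblocks (tstate_of triangle S))) else 0)"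
  unfolding rooted_weight_eq_sum
  by (intro sum.cong) (auto simp: triangle_simps rooted_triangle nul_triangle)

lemma rooted_weight_triangle:
  "rooted_weight triangle y Joined = y + 2"
  "rooted_weight triangle y Top_apart = 1" "rooted_weight triangle y Lft_apart = 1"
  "rooted_weight triangle y Rgt_apart = 1" "rooted_weight triangle y Apart = 1"
  unfolding rooted_weight_triangle_eq
  by (simp_all add: sum_Pow_insert tstate_of_triangle tstate_mk_def)

lemma all_Pow_insert:
  "(\<forall>S\<in>Pow (insert a A). P S) \<longleftrightarrow> (\<forall>S\<in>Pow A. P S \<and> P (insert a S))"
  unfolding Pow_insert by blast

lemma rooted_rank_le_card_triangle: "rooted_rank_le_card triangle"
  unfolding rooted_rank_le_card_def
proof (intro allI impI)
  fix S assume "rooted triangle S"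
  then have S: "S \<subseteq> edge_ids triangle" by (simp add: rooted_def)
  then have "S \<in> Pow {0,1,2}" by (simp add: triangle_simps)
  moreover have "\<forall>S\<in>Pow {0::nat,1,2}. 3 - nblocks (tstate_of triangle S) \<le> card S"
    unfolding all_Pow_insert by (simp add: tstate_of_triangle tstate_mk_def card_insert_if)
  ultimately show "rk triangle S \<le> card S" unfolding rk_triangle[OF S] by blast
qed

lemma connected_triangle:
  "rooted triangle (edge_ids triangle)" "tstate_of triangle (edge_ids triangle) = Joined"
  by (simp_all add: rooted_triangle tstate_of_triangle triangle_simps tstate_mk_def)

section \<open>Sierpinski graphs\<close>

definition sier_invariant :: "nat \<Rightarrow> sgraph \<Rightarrow> bool" where
  "sier_invariant k K \<longleftrightarrow> three_terminal K \<and> rooted_rank_le_card K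
     \<and> rooted K (edge_ids K) \<and> tstate_of K (edge_ids K) = Joined
     \<and> (\<forall>y. rooted_weight K y Lft_apart = rooted_weight K y Top_apart
          \<and> rooted_weight K y Rgt_apart = rooted_weight K y Top_apart)
     \<and> 2 * card (verts K) = 3 ^ (k + 1) + 3 \<and> length (edges K) = 3 ^ (k + 1)"

lemma rooted_weight_sier_step_rec:
  assumes "three_terminal K" "rooted_rank_le_card K"
    and "rooted_weight K y Lft_apart = rooted_weight K y Top_apart"
    and "rooted_weight K y Rgt_apart = rooted_weight K y Top_apart"
  shows "rooted_weight (sier_step K) y s =
    (let W = rooted_weight K y in
     case s of
       Joined \<Rightarrow> (y - 1) * W Joined ^ 3 + 6 * W Joined ^ 2 * W Top_apart
     | Apart \<Rightarrow> 3 * (y - 1) * W Joined * W Top_apart ^ 2 + 12 * W Joined * W Top_apart * W Apart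
         + 14 * W Top_apart ^ 3
     | _ \<Rightarrow> (y - 1) * W Joined ^ 2 * W Top_apart + W Joined ^ 2 * W Apart + 7 * W Joined * W Top_apart ^ 2)"
  using three_terminal.rooted_weight_sier_step[OF assms(1,2)] sum_glue_factor[of "rooted_weight K y", OF assms(3,4)]
  by (simp add: Let_def)

lemma sier_invariant_sier_aux: "sier_invariant k (sier_aux k)"
proof (induction k)
  case 0
  show ?case
    unfolding sier_invariant_def
    using three_terminal_triangle rooted_rank_le_card_triangle connected_triangle rooted_weight_triangle
    by (simp add: triangle_simps)
next
  case (Suc k)
  let ?K = "sier_aux k"
  have K: "three_terminal ?K" "rooted_rank_le_card ?K" "rooted ?K (edge_ids ?K)" "tstate_of ?K (edge_ids ?K) = Joined"
    "\<And>y. rooted_weight ?K y Lft_apart = rooted_weight ?K y Top_apart"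
    "\<And>y. rooted_weight ?K y Rgt_apart = rooted_weight ?K y Top_apart"
    "2 * card (verts ?K) = 3 ^ (k + 1) + 3" "length (edges ?K) = 3 ^ (k + 1)"
    using Suc unfolding sier_invariant_def by auto
  note rec = rooted_weight_sier_step_rec[OF K(1,2) K(5,6)]
  have "2 * card (verts (sier_step ?K)) = 3 ^ (Suc k + 1) + 3"
    using three_terminal.card_verts_sier_step[OF K(1)] three_terminal.card_verts_ge_3[OF K(1)] K(7)
    by simp
  moreover have "length (edges (sier_step ?K)) = 3 ^ (Suc k + 1)"
    using three_terminal.length_edges_sier_step[OF K(1)] K(8) by simp
  moreover have "rooted_weight (sier_step ?K) y Lft_apart = rooted_weight (sier_step ?K) y Top_apart
      \<and> rooted_weight (sier_step ?K) y Rgt_apart = rooted_weight (sier_step ?K) y Top_apart" for y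
    using rec[of y Lft_apart] rec[of y Top_apart] rec[of y Rgt_apart] by (simp add: Let_def)
  ultimately show ?case
    unfolding sier_invariant_def
    using three_terminal.three_terminal_sier_step[OF K(1)] three_terminal.rooted_rank_le_card_sier_step[OF K(1,2)]
      three_terminal.connected_sier_step[OF K(1,3,4)]
    by simp
qed

lemma sier_invariant_Sierpinski: "1 \<le> n \<Longrightarrow> sier_invariant (n - 1) (Sierpinski n)"
  by (simp add: Sierpinski_def sier_invariant_sier_aux)

lemma Sierpinski_Suc: "1 \<le> n \<Longrightarrow> Sierpinski (n + 1) = sier_step (Sierpinski n)"
  by (cases n) (simp_all add: Sierpinski_def)

lemma Sierpinski_at_1:
  assumes "1 \<le> n"
  shows "tutte (Sierpinski n) 1 y = T2 (Sierpinski n) 1 y"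
    and "T2 (Sierpinski n) 1 y = rooted_weight (Sierpinski n) y Joined"
    and "Npoly (Sierpinski n) 1 y = rooted_weight (Sierpinski n) y Top_apart"
    and "Mpoly (Sierpinski n) 1 y = rooted_weight (Sierpinski n) y Apart"
proof -
  have K: "three_terminal (Sierpinski n)" "rooted (Sierpinski n) (edge_ids (Sierpinski n))"
    "tstate_of (Sierpinski n) (edge_ids (Sierpinski n)) = Joined"
    using sier_invariant_Sierpinski[OF assms] unfolding sier_invariant_def by auto
  show "tutte (Sierpinski n) 1 y = T2 (Sierpinski n) 1 y"
    by (rule three_terminal.tutte_at_1[OF K])
  show "T2 (Sierpinski n) 1 y = rooted_weight (Sierpinski n) y Joined"
    by (rule three_terminal.T2_at_1[OF K])
  show "Npoly (Sierpinski n) 1 y = rooted_weight (Sierpinski n) y Top_apart"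
    by (rule three_terminal.Npoly_at_1[OF K])
  show "Mpoly (Sierpinski n) 1 y = rooted_weight (Sierpinski n) y Apart"
    by (rule three_terminal.Mpoly_at_1[OF K])
qed

lemma rooted_weight_Sierpinski_Suc:
  assumes "1 \<le> n"
  shows "rooted_weight (Sierpinski (n + 1)) y s =
    (let W = rooted_weight (Sierpinski n) y in
     case s of
       Joined \<Rightarrow> (y - 1) * W Joined ^ 3 + 6 * W Joined ^ 2 * W Top_apart
     | Apart \<Rightarrow> 3 * (y - 1) * W Joined * W Top_apart ^ 2 + 12 * W Joined * W Top_apart * W Apart
         + 14 * W Top_apart ^ 3
     | _ \<Rightarrow> (y - 1) * W Joined ^ 2 * W Top_apart + W Joined ^ 2 * W Apart + 7 * W Joined * W Top_apart ^ 2)"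
  using sier_invariant_Sierpinski[OF assms] unfolding Sierpinski_Suc[OF assms] sier_invariant_def
  by (intro rooted_weight_sier_step_rec) auto

lemma reliability_Sierpinski:
  assumes "1 \<le> n" "p < 1"
  shows "reliability (Sierpinski n) p
    = p ^ ((3 ^ n + 1) div 2) * (1 - p) ^ ((3 ^ n - 1) div 2) * rooted_weight (Sierpinski n) (1 / (1 - p)) Joined"
proof -
  let ?K = "Sierpinski n"
  have K: "three_terminal ?K" "rooted_rank_le_card ?K"
    and verts: "2 * card (verts ?K) = 3 ^ n + 3" and edges: "card (edge_ids ?K) = 3 ^ n"
    using sier_invariant_Sierpinski[OF assms(1)] assms(1) unfolding sier_invariant_def
    by (simp_all add: edge_ids_def)
  have "(3 ^ n + 1) div 2 = card (verts ?K) - 1" "(3 ^ n - 1) div 2 = card (edge_ids ?K) - (card (verts ?K) - 1)"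
    using verts edges by presburger+
  then show ?thesis
    using three_terminal.reliability_eq[OF K assms(2)] by simp
qed

theorem proposition3p4:
  fixes n :: nat and p :: real
  assumes "n \<ge> 1" and "0 \<le> p" and "p < 1"
  shows "reliability (Sierpinski n) p
           = p ^ ((3^n + 1) div 2) * (1 - p) ^ ((3^n - 1) div 2)
             * tutte (Sierpinski n) 1 (1 / (1 - p))
    \<and> tutte (Sierpinski n) 1 (1 / (1 - p)) = T2 (Sierpinski n) 1 (1 / (1 - p))
    \<and> T2 (Sierpinski (n+1)) 1 (1 / (1 - p))
        = p / (1 - p) * T2 (Sierpinski n) 1 (1 / (1 - p)) ^ 3
          + 6 * T2 (Sierpinski n) 1 (1 / (1 - p)) ^ 2 * Npoly (Sierpinski n) 1 (1 / (1 - p))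
    \<and> Npoly (Sierpinski (n+1)) 1 (1 / (1 - p))
        = p / (1 - p) * T2 (Sierpinski n) 1 (1 / (1 - p)) ^ 2 * Npoly (Sierpinski n) 1 (1 / (1 - p))
          + T2 (Sierpinski n) 1 (1 / (1 - p)) ^ 2 * Mpoly (Sierpinski n) 1 (1 / (1 - p))
          + 7 * T2 (Sierpinski n) 1 (1 / (1 - p)) * Npoly (Sierpinski n) 1 (1 / (1 - p)) ^ 2
    \<and> Mpoly (Sierpinski (n+1)) 1 (1 / (1 - p))
        = 3 * p / (1 - p) * T2 (Sierpinski n) 1 (1 / (1 - p)) * Npoly (Sierpinski n) 1 (1 / (1 - p)) ^ 2
          + 12 * T2 (Sierpinski n) 1 (1 / (1 - p)) * Npoly (Sierpinski n) 1 (1 / (1 - p))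
               * Mpoly (Sierpinski n) 1 (1 / (1 - p))
          + 14 * Npoly (Sierpinski n) 1 (1 / (1 - p)) ^ 3
    \<and> T2 (Sierpinski 1) 1 (1 / (1 - p)) = (3 - 2 * p) / (1 - p)
    \<and> Npoly (Sierpinski 1) 1 (1 / (1 - p)) = 1
    \<and> Mpoly (Sierpinski 1) 1 (1 / (1 - p)) = 1"
proof -
  let ?y = "1 / (1 - p)"
  have y: "?y - 1 = p / (1 - p)" and base: "?y + 2 = (3 - 2 * p) / (1 - p)"
    using assms(3) by (simp_all add: field_simps)
  have "Sierpinski 1 = triangle"
    by (simp add: Sierpinski_def)
  then have triangle:
    "T2 (Sierpinski 1) 1 ?y = ?y + 2" "Npoly (Sierpinski 1) 1 ?y = 1" "Mpoly (Sierpinski 1) 1 ?y = 1"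
    using Sierpinski_at_1[of 1] rooted_weight_triangle by simp_all
  have n1: "1 \<le> n + 1" by simp
  show ?thesis
    unfolding reliability_Sierpinski[OF assms(1,3)] Sierpinski_at_1[OF assms(1)] Sierpinski_at_1[OF n1]
      rooted_weight_Sierpinski_Suc[OF assms(1)] triangle base y Let_def
    by (simp add: algebra_simps)
qed

end
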